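(* Consider the hidden factor model described in the context and suppose Assumptions 1–3 hold. Then for every $j=1,\dots,p$: (i) $\Theta_{j,j}=1/\tau_j^2$ with $$\tau_j^2=(\bar a_j'\bar a_j+\sigma_j^2)-\bar a_j'\bar A_{-j}'\Sigma_{U,-j}^{-1}\bar A_{-j}\bar G_j^{-1}\bar a_j;$$ (ii) $\Theta_{j,-j}=-\alpha_j^{*\prime}/\tau_j^2$ with $\alpha_j^*=\Sigma_{U,-j}^{-1}\bar A_{-j}\bar G_j^{-1}\bar a_j$; (iii) consequently the $j$th row of $\Theta$ is $\big(1/\tau_j^2,\,-\alpha_j^{*\prime}/\tau_j^2\big)$ (with entry $j$ placed first), and stacking these rows over $j=1,\dots,p$ gives $\Theta$.
   Context: Data: $Y=FA+U$ with $Y\in\mathbb R^{n\times p}$ (rows $y_t'$, $t=1,\dots,n$), $F\in\mathbb R^{n\times K}$ (rows $f_t'$, hidden factors), $A\in\mathbb R^{K\times p}$ (loadings), $U\in\mathbb R^{n\times p}$ (rows $u_t'$). For each $j$ write (after reordering) $A=[a_j,A_{-j}']$ with $a_j\in\mathbb R^K$, $A_{-j}\in\mathbb R^{(p-1)\times K}$, so that $y_{jt}=f_t'a_j+u_{jt}$ and $Y_{-jt}=A_{-j}f_t+U_{-jt}\in\mathbb R^{p-1}$ (all outcomes except $j$). Let $\sigma_j^2=\mathrm{var}(u_{jt})$, $\Sigma_{U,-j}=\mathrm{var}(U_{-jt})$, $\Sigma_f=\mathrm{cov}(f_t)$, $\mu_j=Ey_{jt}$, $\mu_{-j}=EY_{-jt}$,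 $\Sigma=E(y_t-Ey_t)(y_t-Ey_t)'$, $\Theta=\Sigma^{-1}$; $\Theta_{j,j}$ is its $j$th diagonal entry and $\Theta_{j,-j}$ its $j$th row with entry $j$ removed. Define $\alpha_j^*=\arg\min_{\alpha\in\mathbb R^{p-1}}E[(y_{jt}-\mu_j)-(Y_{-jt}-\mu_{-j})'\alpha]^2$, $\Sigma_f^{1/2}$ the symmetric square root, $\bar A_{-j}=A_{-j}\Sigma_f^{1/2}$, $\bar a_j=\Sigma_f^{1/2}a_j$, $\bar G_j=I_K+\bar A_{-j}'\Sigma_{U,-j}^{-1}\bar A_{-j}$. Assumption 1: for each $j$, $(y_{jt},Y_{-jt})$ are iid over $t$; $u_{jt},U_{-jt}$ are zero mean and iid over $t$; $f_t$ iid over $t$; $f_t,u_{jt},U_{-jt}$ are mutually independent. Assumption 2: (i) $\min_j\lambda_{\min}(\Sigma_{U,-j})\ge c>0$, $\max_j\sigma_j^2=\sigma^2\le C<\infty$, $\min_j\sigma_j^2\ge c>0$; (ii) $\delta_n:=\min_j\|\Sigma_{U,-j}\|_2$ and $r_n:=\max_j\|\Sigma_{U,-j}\|_2$ are nondecreasing in $n$ and $r_n/p\to0$. Assumption 3: (i) $p\le n^{C_p/2}$ for a constant $C_p>0$; (ii) for each $j$, $A_{-j}$ has full rank $K$, $p>K+1$, $\max_j\|A_{-j}\|_2=O(d_{1n})$ with $d_{1n}\to\infty$ and $d_{1n}/\sqrt p\to0$; $\Sigma_f$ has full rank $K$ and $\lambda_{\max}(\Sigma_f)\le C<\infty$. 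*)

theory Defs
  imports "HOL-Probability.Probability" "Jordan_Normal_Form.Jordan_Normal_Form"
    "Jordan_Normal_Form.DL_Rank"
begin

definition cov :: "'a measure \<Rightarrow> ('a \<Rightarrow> real) \<Rightarrow> ('a \<Rightarrow> real) \<Rightarrow> real" where
  "cov M X Y = (\<integral>\<omega>. (X \<omega> - (\<integral>\<omega>'. X \<omega>' \<partial>M)) * (Y \<omega> - (\<integral>\<omega>'. Y \<omega>' \<partial>M)) \<partial>M)"

definition cov_mat :: "'a measure \<Rightarrow> ('a \<Rightarrow> nat \<Rightarrow> real) \<Rightarrow> nat \<Rightarrow> real mat" where
  "cov_mat M X n = mat n n (\<lambda>(i,l). cov M (\<lambda>\<omega>. X \<omega> i) (\<lambda>\<omega>. X \<omega> l))"

definition mat_inv :: "real mat \<Rightarrow> real mat" where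
  "mat_inv A = the (mat_inverse A)"

definition psd_mat :: "real mat \<Rightarrow> bool" where
  "psd_mat S \<longleftrightarrow> (\<forall>v \<in> carrier_vec (dim_row S). v \<bullet> (S *\<^sub>v v) \<ge> 0)"

definition mat_sqrt :: "real mat \<Rightarrow> real mat" where
  "mat_sqrt M = (THE S. S \<in> carrier_mat (dim_row M) (dim_row M) \<and> S\<^sup>T = S \<and> psd_mat S \<and> S * S = M)"

(* index j removed: position i of the (p-1)-vector corresponds to outcome insert_index j i *)
definition delete_index :: "nat \<Rightarrow> nat \<Rightarrow> nat" where
  "delete_index j l = (if l < j then l else l - 1)"

(* model quantities, for outcome j; u = idiosyncratic errors, f = factors, A = K x p loadings *)
definition A_minus :: "real mat \<Rightarrow> nat \<Rightarrow> nat \<Rightarrow> real mat" where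
  "A_minus A p j = mat (p - 1) (dim_row A) (\<lambda>(i,k). A $$ (k, insert_index j i))"

definition a_col :: "real mat \<Rightarrow> nat \<Rightarrow> real vec" where
  "a_col A j = vec (dim_row A) (\<lambda>k. A $$ (k, j))"

definition Sigma_U_minus :: "'a measure \<Rightarrow> ('a \<Rightarrow> nat \<Rightarrow> real) \<Rightarrow> nat \<Rightarrow> nat \<Rightarrow> real mat" where
  "Sigma_U_minus M u p j = cov_mat M (\<lambda>\<omega> i. u \<omega> (insert_index j i)) (p - 1)"

definition sigma2 :: "'a measure \<Rightarrow> ('a \<Rightarrow> nat \<Rightarrow> real) \<Rightarrow> nat \<Rightarrow> real" where
  "sigma2 M u j = cov M (\<lambda>\<omega>. u \<omega> j) (\<lambda>\<omega>. u \<omega> j)"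

definition alpha_star :: "'a measure \<Rightarrow> ('a \<Rightarrow> nat \<Rightarrow> real) \<Rightarrow> nat \<Rightarrow> nat \<Rightarrow> real vec" where
  "alpha_star M y p j = (THE \<alpha>. \<alpha> \<in> carrier_vec (p - 1) \<and>
     (\<forall>\<beta> \<in> carrier_vec (p - 1).
        (\<integral>\<omega>. ((y \<omega> j - (\<integral>\<omega>'. y \<omega>' j \<partial>M))
               - (\<Sum>i<p - 1. (y \<omega> (insert_index j i) - (\<integral>\<omega>'. y \<omega>' (insert_index j i) \<partial>M)) * \<alpha> $ i))\<^sup>2 \<partial>M)
        \<le> (\<integral>\<omega>. ((y \<omega> j - (\<integral>\<omega>'. y \<omega>' j \<partial>M))
               - (\<Sum>i<p - 1. (y \<omega> (insert_index j i) - (\<integral>\<omega>'. y \<omega>' (insert_index j i) \<partial>M)) * \<beta> $ i))\<^sup>2 \<partial>M)))"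

definition Abar :: "'a measure \<Rightarrow> ('a \<Rightarrow> nat \<Rightarrow> real) \<Rightarrow> real mat \<Rightarrow> nat \<Rightarrow> nat \<Rightarrow> real mat" where
  "Abar M f A p j = A_minus A p j * mat_sqrt (cov_mat M f (dim_row A))"

definition abar :: "'a measure \<Rightarrow> ('a \<Rightarrow> nat \<Rightarrow> real) \<Rightarrow> real mat \<Rightarrow> nat \<Rightarrow> real vec" where
  "abar M f A j = mat_sqrt (cov_mat M f (dim_row A)) *\<^sub>v a_col A j"

definition Gbar :: "'a measure \<Rightarrow> ('a \<Rightarrow> nat \<Rightarrow> real) \<Rightarrow> ('a \<Rightarrow> nat \<Rightarrow> real) \<Rightarrow> real mat \<Rightarrow> nat \<Rightarrow> nat \<Rightarrow> real mat" where
  "Gbar M f u A p j = 1\<^sub>m (dim_row A) + (Abar M f A p j)\<^sup>T * mat_inv (Sigma_U_minus M u p j) * Abar M f A p j"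

definition alpha_formula :: "'a measure \<Rightarrow> ('a \<Rightarrow> nat \<Rightarrow> real) \<Rightarrow> ('a \<Rightarrow> nat \<Rightarrow> real) \<Rightarrow> real mat \<Rightarrow> nat \<Rightarrow> nat \<Rightarrow> real vec" where
  "alpha_formula M f u A p j = mat_inv (Sigma_U_minus M u p j) *\<^sub>v (Abar M f A p j *\<^sub>v (mat_inv (Gbar M f u A p j) *\<^sub>v abar M f A j))"

definition tau2 :: "'a measure \<Rightarrow> ('a \<Rightarrow> nat \<Rightarrow> real) \<Rightarrow> ('a \<Rightarrow> nat \<Rightarrow> real) \<Rightarrow> real mat \<Rightarrow> nat \<Rightarrow> nat \<Rightarrow> real" where
  "tau2 M f u A p j = (abar M f A j \<bullet> abar M f A j + sigma2 M u j)
     - abar M f A j \<bullet> ((Abar M f A p j)\<^sup>T *\<^sub>v alpha_formula M f u A p j)"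

end

theory Submission
  imports Defs "Jordan_Normal_Form.Schur_Decomposition"
begin

(* The covariance matrix of the outcomes is A' Sigma_f A + diag(sigma_j^2), hence positive
   definite. By Woodbury's identity, alpha = Sigma_{U,-j}^{-1} Abar G^{-1} abar solves the
   normal equations Sigma_{-j,-j} alpha = Sigma_{-j,j}, so the weight vector w = (1, -alpha)
   (entry 1 at position j) satisfies Sigma w = tau_j^2 e_j. Consequently row j of
   Theta = Sigma^{-1} is w'/tau_j^2. Since w' Sigma w is the mean squared error of the linear
   prediction of y_j with coefficients alpha, positive definiteness makes alpha its unique
   minimiser, i.e. alpha = alpha_j^*. *)

section \<open>Real symmetric matrices and their square roots\<close>

lemma scalar_prod_self_pos:
  fixes v :: "real vec"
  assumes "v \<in> carrier_vec n" "v \<noteq> 0\<^sub>v n"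
  shows "v \<bullet> v > 0"
  using conjugate_square_greater_0_vec[OF assms(1)] assms(2) by simp

lemma scalar_prod_self_nonneg: "(v :: real vec) \<bullet> v \<ge> 0"
  using conjugate_square_ge_0_vec[of v] by simp

lemma real_symmetric_hermitian_form:
  fixes A :: "real mat" and v :: "complex vec"
  assumes A: "A \<in> carrier_mat n n" and sym: "A\<^sup>T = A"
  shows "cnj (\<Sum>i<n. \<Sum>k<n. cnj (v $ i) * map_mat complex_of_real A $$ (i,k) * v $ k)
    = (\<Sum>i<n. \<Sum>k<n. cnj (v $ i) * map_mat complex_of_real A $$ (i,k) * v $ k)"
    (is "cnj ?q = ?q")
proof -
  let ?C = "map_mat complex_of_real A"
  have "cnj ?q = (\<Sum>i<n. \<Sum>k<n. v $ i * ?C $$ (i,k) * cnj (v $ k))"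
    using A by (simp add: cnj_sum)
  also have "\<dots> = (\<Sum>k<n. \<Sum>i<n. v $ i * ?C $$ (i,k) * cnj (v $ k))" by (rule sum.swap)
  also have "\<dots> = ?q"
  proof (intro sum.cong refl)
    fix k i assume ki: "k \<in> {..<n}" "i \<in> {..<n}"
    then have "A $$ (i,k) = A $$ (k,i)"
      using sym A by (metis carrier_matD index_transpose_mat(1) lessThan_iff)
    then show "v $ i * ?C $$ (i,k) * cnj (v $ k) = cnj (v $ k) * ?C $$ (k,i) * v $ i"
      using A ki by auto
  qed
  finally show ?thesis .
qed

lemma real_symmetric_complex_eigenvalue_real:
  fixes A :: "real mat" and v :: "complex vec"
  assumes A: "A \<in> carrier_mat n n" and sym: "A\<^sup>T = A"
    and v: "v \<in> carrier_vec n" "v \<noteq> 0\<^sub>v n"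
    and Av: "map_mat complex_of_real A *\<^sub>v v = z \<cdot>\<^sub>v v"
  shows "z \<in> \<real>"
proof -
  let ?C = "map_mat complex_of_real A"
  define q where "q = (\<Sum>i<n. \<Sum>k<n. cnj (v $ i) * ?C $$ (i,k) * v $ k)"
  define nv where "nv = (\<Sum>i<n. cnj (v $ i) * v $ i)"
  have Cv: "(\<Sum>k<n. ?C $$ (i,k) * v $ k) = z * v $ i" if "i < n" for i
  proof -
    have "(\<Sum>k<n. ?C $$ (i,k) * v $ k) = (?C *\<^sub>v v) $ i"
      using that v A by (simp add: scalar_prod_def atLeast0LessThan)
    then show ?thesis using Av that v by simp
  qed
  have "q = (\<Sum>i<n. cnj (v $ i) * (\<Sum>k<n. ?C $$ (i,k) * v $ k))"
    unfolding q_def by (simp add: sum_distrib_left mult.assoc)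
  also have "\<dots> = z * nv"
    unfolding nv_def using Cv by (auto simp: sum_distrib_left intro!: sum.cong)
  finally have qz: "q = z * nv" .
  have qr: "cnj q = q" unfolding q_def by (rule real_symmetric_hermitian_form[OF A sym])
  have nvr: "cnj nv = nv" unfolding nv_def by (simp add: cnj_sum mult.commute)
  have "nv \<noteq> 0"
  proof
    assume "nv = 0"
    obtain i where "i < n" "v $ i \<noteq> 0" using v by (metis eq_vecI carrier_vecD index_zero_vec)
    then have "(\<Sum>i<n. (Re (v $ i))\<^sup>2 + (Im (v $ i))\<^sup>2) > 0"
      by (intro sum_pos2[of _ i]) (auto simp: complex_neq_0)
    moreover have "Re nv = (\<Sum>i<n. (Re (v $ i))\<^sup>2 + (Im (v $ i))\<^sup>2)"
      unfolding nv_def by (simp add: power2_eq_square sum.distrib)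
    ultimately show False using \<open>nv = 0\<close> by simp
  qed
  moreover have "cnj z * nv = z * nv" using qz qr nvr by (metis complex_cnj_mult)
  ultimately have "cnj z = z" by simp
  then show ?thesis by (metis Reals_cnj_iff)
qed

lemma real_symmetric_eigenvalue_exists:
  fixes A :: "real mat"
  assumes A: "A \<in> carrier_mat n n" and sym: "A\<^sup>T = A" and n: "n > 0"
  shows "\<exists>l. eigenvalue A l"
proof -
  let ?C = "map_mat complex_of_real A"
  have C: "?C \<in> carrier_mat n n" using A by auto
  have "degree (char_poly ?C) = n" using degree_monic_char_poly[OF C] by auto
  then obtain z where z: "poly (char_poly ?C) z = 0"
    using fundamental_theorem_of_algebra constant_degree n by (metis neq0_conv)
  then obtain v where "eigenvector ?C v z"
    using eigenvalue_root_char_poly[OF C] unfolding eigenvalue_def by auto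
  then have "z \<in> \<real>"
    using real_symmetric_complex_eigenvalue_real[OF A sym] C unfolding eigenvector_def by auto
  then obtain l where zl: "z = complex_of_real l" by (metis Reals_cases)
  have "complex_of_real (poly (char_poly A) l) = 0"
    using z unfolding of_real_hom.char_poly_hom[OF A] zl by simp
  then show ?thesis using eigenvalue_root_char_poly[OF A] by auto
qed

lemma normalized_orthogonal_list:
  fixes ws :: "real vec list"
  assumes ws: "set ws \<subseteq> carrier_vec n" "corthogonal ws" and i: "i < length ws" and k: "k < length ws"
  defines "us \<equiv> map (\<lambda>w. (1 / sqrt (w \<bullet> w)) \<cdot>\<^sub>v w) ws"
  shows "(us :: real vec list) ! i \<bullet> us ! k = (if i = k then 1 else 0)"
proof -
  have orth: "(ws ! a \<bullet> ws ! b = 0) = (a \<noteq> b)" if "a < length ws" "b < length ws" for a b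
    using ws(2) that unfolding corthogonal_def by auto
  have c: "ws ! a \<in> carrier_vec n" if "a < length ws" for a using ws(1) that by auto
  have pos: "ws ! a \<bullet> ws ! a > 0" if "a < length ws" for a
    using orth[OF that that] c[OF that] scalar_prod_self_pos by fastforce
  have "us ! i \<bullet> us ! k
      = (1 / sqrt (ws ! i \<bullet> ws ! i)) * (1 / sqrt (ws ! k \<bullet> ws ! k)) * (ws ! i \<bullet> ws ! k)"
    unfolding us_def using i k c[OF i] c[OF k]
    by (simp add: smult_scalar_prod_distrib scalar_prod_smult_distrib[of _ n])
  then show ?thesis using orth[OF i k] pos[OF i] pos[OF k]
    by (cases "i = k") (auto simp: real_sqrt_mult[symmetric])
qed

lemma orthonormal_completion:
  fixes v :: "real vec"
  assumes v: "v \<in> carrier_vec n" and unit: "v \<bullet> v = 1"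
  obtains W where "W \<in> carrier_mat n n" "W\<^sup>T * W = 1\<^sub>m n" "col W 0 = v"
proof -
  have v0: "v \<noteq> 0\<^sub>v n" using unit v by auto
  have n: "n > 0"
  proof (rule ccontr)
    assume "\<not> n > 0"
    then have "v = 0\<^sub>v n" using v by (intro eq_vecI) auto
    then show False using v0 by simp
  qed
  interpret vs: vec_space "TYPE(real)" n .
  interpret cvs: cof_vec_space n "TYPE(real)" .
  define b where "b = basis_completion v"
  note bc = vs.basis_completion[OF v v0, folded b_def]
  obtain vs where bv: "b = v # vs" using bc(6,7) n by (cases b) auto
  define ws where "ws = gram_schmidt n b"
  note gs = cvs.gram_schmidt_result[OF bc(2) bc(4) bc(5) ws_def]
  have lws: "length ws = n" using gs bc by auto
  define us where "us = map (\<lambda>w. (1 / sqrt (w \<bullet> w)) \<cdot>\<^sub>v w) ws"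
  have lus: "length us = n" unfolding us_def using lws by simp
  have usc: "\<And>i. i < n \<Longrightarrow> us ! i \<in> carrier_vec n" unfolding us_def using gs(3) lws by auto
  define W where "W = mat_of_cols n us"
  have W: "W \<in> carrier_mat n n" unfolding W_def using lus by auto
  have colW: "\<And>i. i < n \<Longrightarrow> col W i = us ! i" unfolding W_def using lus usc by auto
  have "W\<^sup>T * W = 1\<^sub>m n"
    by (rule eq_matI) (use W colW normalized_orthogonal_list[OF gs(3,2)] lws in \<open>auto simp: us_def\<close>)
  moreover have "col W 0 = v"
  proof -
    have "ws ! 0 = v" using hd_conv_nth[of ws] lws n v unfolding ws_def bv by fastforce
    then show ?thesis using colW[OF n] lws n unit unfolding us_def by simp
  qed
  ultimately show ?thesis using W that by blast
qed

lemma symmetric_orthogonal_deflation: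
  fixes A W :: "real mat"
  assumes A: "A \<in> carrier_mat (Suc n) (Suc n)" and sym: "A\<^sup>T = A"
    and W: "W \<in> carrier_mat (Suc n) (Suc n)" and WW: "W\<^sup>T * W = 1\<^sub>m (Suc n)"
    and eig: "A *\<^sub>v col W 0 = l \<cdot>\<^sub>v col W 0"
  defines "B \<equiv> W\<^sup>T * A * W"
  shows "B = four_block_mat (mat 1 1 (\<lambda>_. l)) (0\<^sub>m 1 n) (0\<^sub>m n 1)
      (mat n n (\<lambda>(i,k). B $$ (Suc i, Suc k)))"
    and "B\<^sup>T = B"
proof -
  have B: "B \<in> carrier_mat (Suc n) (Suc n)" unfolding B_def using A W by auto
  have "B\<^sup>T = W\<^sup>T * (W\<^sup>T * A)\<^sup>T"
    unfolding B_def by (rule transpose_mult) (use A W in auto)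
  also have "(W\<^sup>T * A)\<^sup>T = A\<^sup>T * W\<^sup>T\<^sup>T"
    by (rule transpose_mult) (use A W in auto)
  finally show Bsym: "B\<^sup>T = B"
    unfolding B_def sym using A W by (simp add: assoc_mult_mat[of _ "Suc n" "Suc n" _ "Suc n" _ "Suc n"])
  have "W\<^sup>T * A * W = W\<^sup>T * (A * W)" using A W by (intro assoc_mult_mat) auto
  then have Be: "B $$ (i,k) = col W i \<bullet> (A *\<^sub>v col W k)" if "i < Suc n" "k < Suc n" for i k
    unfolding B_def using A W that by (simp add: mult_mat_vec_def)
  have WWe: "col W i \<bullet> col W k = (if i = k then 1 else 0)" if "i < Suc n" "k < Suc n" for i k
    using arg_cong[OF WW, of "\<lambda>X. X $$ (i,k)"] W that by simp
  have col0: "B $$ (i,0) = (if i = 0 then l else 0)" if i: "i < Suc n" for i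
    using Be[OF i] WWe[OF i] W i by (simp add: eig)
  have row0: "B $$ (0,k) = (if k = 0 then l else 0)" if k: "k < Suc n" for k
    using col0[OF k] Bsym B k by (metis carrier_matD index_transpose_mat(1) zero_less_Suc)
  show "B = four_block_mat (mat 1 1 (\<lambda>_. l)) (0\<^sub>m 1 n) (0\<^sub>m n 1)
      (mat n n (\<lambda>(i,k). B $$ (Suc i, Suc k)))"
  proof (rule eq_matI)
    fix i k assume "i < dim_row (four_block_mat (mat 1 1 (\<lambda>_. l)) (0\<^sub>m 1 n) (0\<^sub>m n 1)
      (mat n n (\<lambda>(i,k). B $$ (Suc i, Suc k))))"
      "k < dim_col (four_block_mat (mat 1 1 (\<lambda>_. l)) (0\<^sub>m 1 n) (0\<^sub>m n 1)
      (mat n n (\<lambda>(i,k). B $$ (Suc i, Suc k))))"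
    then have "i < Suc n" "k < Suc n" by auto
    then show "B $$ (i,k) = four_block_mat (mat 1 1 (\<lambda>_. l)) (0\<^sub>m 1 n) (0\<^sub>m n 1)
      (mat n n (\<lambda>(i,k). B $$ (Suc i, Suc k))) $$ (i,k)"
      using col0 row0 by (cases i; cases k) auto
  qed (use B in auto)
qed

lemma lower_block_transpose:
  fixes B :: "real mat"
  assumes "B \<in> carrier_mat (Suc n) (Suc n)" "B\<^sup>T = B"
  shows "(mat n n (\<lambda>(i,k). B $$ (Suc i, Suc k)))\<^sup>T = mat n n (\<lambda>(i,k). B $$ (Suc i, Suc k))"
proof (rule eq_matI)
  fix i k assume "i < dim_row (mat n n (\<lambda>(i,k). B $$ (Suc i, Suc k)))"
    "k < dim_col (mat n n (\<lambda>(i,k). B $$ (Suc i, Suc k)))"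
  then show "(mat n n (\<lambda>(i,k). B $$ (Suc i, Suc k)))\<^sup>T $$ (i,k)
      = mat n n (\<lambda>(i,k). B $$ (Suc i, Suc k)) $$ (i,k)"
    using arg_cong[OF assms(2), of "\<lambda>X. X $$ (Suc k, Suc i)"] assms(1) by simp
qed auto

lemma orthogonal_block_extension:
  fixes P A :: "real mat"
  assumes P: "P \<in> carrier_mat n n" "P\<^sup>T * P = 1\<^sub>m n" and A: "A \<in> carrier_mat n n"
  defines "B \<equiv> four_block_mat (1\<^sub>m 1) (0\<^sub>m 1 n) (0\<^sub>m n 1) P"
  shows "B \<in> carrier_mat (Suc n) (Suc n)" and "B\<^sup>T * B = 1\<^sub>m (Suc n)"
    and "B\<^sup>T * four_block_mat (mat 1 1 (\<lambda>_. l)) (0\<^sub>m 1 n) (0\<^sub>m n 1) A * B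
      = four_block_mat (mat 1 1 (\<lambda>_. l)) (0\<^sub>m 1 n) (0\<^sub>m n 1) (P\<^sup>T * A * P)"
proof -
  show "B \<in> carrier_mat (Suc n) (Suc n)" unfolding B_def using P by auto
  have BT: "B\<^sup>T = four_block_mat (1\<^sub>m 1) (0\<^sub>m 1 n) (0\<^sub>m n 1) P\<^sup>T"
    unfolding B_def using P by (subst transpose_four_block_mat) auto
  show "B\<^sup>T * B = 1\<^sub>m (Suc n)" unfolding BT unfolding B_def using P
    by (subst mult_four_block_mat[of _ 1 1 _ n _ n _ _ 1 _ n]) auto
  show "B\<^sup>T * four_block_mat (mat 1 1 (\<lambda>_. l)) (0\<^sub>m 1 n) (0\<^sub>m n 1) A * B
      = four_block_mat (mat 1 1 (\<lambda>_. l)) (0\<^sub>m 1 n) (0\<^sub>m n 1) (P\<^sup>T * A * P)"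
    unfolding BT unfolding B_def using P A by (simp add: mult_four_block_mat[of _ 1 1 _ n _ n _ _ 1 _ n])
qed

lemma orthogonal_mult:
  fixes W B :: "real mat"
  assumes W: "W \<in> carrier_mat n n" "W\<^sup>T * W = 1\<^sub>m n" and B: "B \<in> carrier_mat n n" "B\<^sup>T * B = 1\<^sub>m n"
  shows "(W * B)\<^sup>T * (W * B) = 1\<^sub>m n"
proof -
  have "(W * B)\<^sup>T * (W * B) = B\<^sup>T * (W\<^sup>T * (W * B))"
    using W(1) B(1) by (simp add: transpose_mult assoc_mult_mat[of _ n n _ n _ n])
  also have "W\<^sup>T * (W * B) = B"
    using W B(1) by (simp add: assoc_mult_mat[symmetric, of _ n n _ n _ n])
  finally show ?thesis using B by simp
qed

lemma real_symmetric_orthogonal_diagonalization: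
  fixes A :: "real mat"
  assumes "A \<in> carrier_mat n n" "A\<^sup>T = A"
  shows "\<exists>P \<in> carrier_mat n n. P\<^sup>T * P = 1\<^sub>m n \<and> diagonal_mat (P\<^sup>T * A * P)"
  using assms
proof (induction n arbitrary: A)
  case 0
  show ?case by (intro bexI[of _ "1\<^sub>m 0"]) (auto simp: diagonal_mat_def)
next
  case (Suc n A)
  note A = Suc.prems(1) and sym = Suc.prems(2)
  obtain l v where v: "v \<in> carrier_vec (Suc n)" "v \<noteq> 0\<^sub>v (Suc n)" "A *\<^sub>v v = l \<cdot>\<^sub>v v"
    using real_symmetric_eigenvalue_exists[OF A sym] A
    unfolding eigenvalue_def eigenvector_def by auto
  define v0 where "v0 = (1 / sqrt (v \<bullet> v)) \<cdot>\<^sub>v v"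
  have vv: "v \<bullet> v > 0" using scalar_prod_self_pos v by auto
  have v0: "v0 \<in> carrier_vec (Suc n)" unfolding v0_def using v by auto
  have "v0 \<bullet> v0 = 1" unfolding v0_def using v vv
    by (simp add: smult_scalar_prod_distrib scalar_prod_smult_distrib[of v "Suc n"])
  then obtain W where W: "W \<in> carrier_mat (Suc n) (Suc n)" "W\<^sup>T * W = 1\<^sub>m (Suc n)"
    and W0: "col W 0 = v0" using orthonormal_completion[OF v0] by blast
  have "A *\<^sub>v col W 0 = l \<cdot>\<^sub>v col W 0" unfolding W0 v0_def using v A
    by (simp add: mult_mat_vec smult_smult_assoc mult.commute)
  note defl = symmetric_orthogonal_deflation[OF A sym W this]
  define A3 where "A3 = mat n n (\<lambda>(i,k). (W\<^sup>T * A * W) $$ (Suc i, Suc k))"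
  have A3: "A3 \<in> carrier_mat n n" unfolding A3_def by auto
  have "A3\<^sup>T = A3" unfolding A3_def by (rule lower_block_transpose) (use A W defl(2) in auto)
  then obtain P3 where P3: "P3 \<in> carrier_mat n n" "P3\<^sup>T * P3 = 1\<^sub>m n"
    "diagonal_mat (P3\<^sup>T * A3 * P3)" using Suc.IH[OF A3] by auto
  define B where "B = four_block_mat (1\<^sub>m 1) (0\<^sub>m 1 n) (0\<^sub>m n 1) P3"
  note B = orthogonal_block_extension[OF P3(1,2) A3, folded B_def]
  have P: "W * B \<in> carrier_mat (Suc n) (Suc n)" "(W * B)\<^sup>T * (W * B) = 1\<^sub>m (Suc n)"
    using W B(1,2) orthogonal_mult[OF W B(1,2)] by auto
  have "(W * B)\<^sup>T * A * (W * B) = B\<^sup>T * (W\<^sup>T * A * W) * B"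
    using W B(1) A by (simp add: transpose_mult assoc_mult_mat[of _ "Suc n" "Suc n" _ "Suc n" _ "Suc n"])
  also have "\<dots> = four_block_mat (mat 1 1 (\<lambda>_. l)) (0\<^sub>m 1 n) (0\<^sub>m n 1) (P3\<^sup>T * A3 * P3)"
    unfolding defl(1)[folded A3_def] by (rule B(3))
  finally have "diagonal_mat ((W * B)\<^sup>T * A * (W * B))"
    using P3(3) P3(1) A3 unfolding diagonal_mat_def by auto
  then show ?case using P by auto
qed

lemma mat_eq_on_orthonormal_basis:
  fixes X Y P :: "real mat"
  assumes X: "X \<in> carrier_mat n n" and Y: "Y \<in> carrier_mat n n"
    and P: "P \<in> carrier_mat n n" "P\<^sup>T * P = 1\<^sub>m n"
    and XY: "\<And>i. i < n \<Longrightarrow> X *\<^sub>v col P i = Y *\<^sub>v col P i"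
  shows "X = Y"
proof -
  have "X * P = Y * P"
  proof (rule mat_col_eqI)
    fix i assume "i < dim_col (Y * P)"
    then have i: "i < n" using P by simp
    have "col (X * P) i = X *\<^sub>v col P i" using X P i by (intro col_mult2) auto
    also have "\<dots> = Y *\<^sub>v col P i" by (rule XY[OF i])
    also have "\<dots> = col (Y * P) i" using Y P i by (intro col_mult2[symmetric]) auto
    finally show "col (X * P) i = col (Y * P) i" .
  qed (use X Y P in auto)
  then have "X * P * P\<^sup>T = Y * P * P\<^sup>T" by simp
  moreover have "P * P\<^sup>T = 1\<^sub>m n" using mat_mult_left_right_inverse[of "P\<^sup>T" n P] P by simp
  ultimately show ?thesis using X Y P by (simp add: assoc_mult_mat[of _ n n _ n _ n])
qed

lemma orthonormal_col:
  fixes P :: "real mat"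
  assumes P: "P \<in> carrier_mat n n" "P\<^sup>T * P = 1\<^sub>m n" and i: "i < n"
  shows "P\<^sup>T *\<^sub>v col P i = unit_vec n i" and "col P i \<noteq> 0\<^sub>v n"
proof -
  show Pc: "P\<^sup>T *\<^sub>v col P i = unit_vec n i"
    using col_mult2[of "P\<^sup>T" n n P n i] P i by simp
  show "col P i \<noteq> 0\<^sub>v n"
  proof
    assume "col P i = 0\<^sub>v n"
    then have "unit_vec n i = P\<^sup>T *\<^sub>v 0\<^sub>v n" using Pc by simp
    also have "\<dots> = 0\<^sub>v n" using P by auto
    finally have "unit_vec n i $ i = (0\<^sub>v n :: real vec) $ i" by simp
    then show False using i by simp
  qed
qed

lemma real_symmetric_eigenbasis:
  fixes S :: "real mat"
  assumes S: "S \<in> carrier_mat n n" and sym: "S\<^sup>T = S"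
  obtains P d where "P \<in> carrier_mat n n" "P\<^sup>T * P = 1\<^sub>m n"
    "\<And>i. i < n \<Longrightarrow> S *\<^sub>v col P i = d i \<cdot>\<^sub>v col P i"
proof -
  obtain P where P: "P \<in> carrier_mat n n" "P\<^sup>T * P = 1\<^sub>m n"
    and dg: "diagonal_mat (P\<^sup>T * S * P)"
    using real_symmetric_orthogonal_diagonalization[OF S sym] by blast
  define L where "L = P\<^sup>T * S * P"
  have L: "L \<in> carrier_mat n n" unfolding L_def using P(1) S by simp
  have dgL: "diagonal_mat L" using dg unfolding L_def .
  have PPt: "P * P\<^sup>T = 1\<^sub>m n" using mat_mult_left_right_inverse[of "P\<^sup>T" n P] P by simp
  have "P * L = (P * P\<^sup>T) * S * P"
    unfolding L_def using P(1) S by (simp add: assoc_mult_mat[of _ n n _ n _ n])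
  then have SP: "S * P = P * L" unfolding PPt using S by simp
  have "S *\<^sub>v col P i = L $$ (i,i) \<cdot>\<^sub>v col P i" if i: "i < n" for i
  proof (rule eq_vecI)
    fix r assume "r < dim_vec (L $$ (i,i) \<cdot>\<^sub>v col P i)"
    then have r: "r < n" using P(1) by simp
    have "(S *\<^sub>v col P i) $ r = (S * P) $$ (r,i)" using S P(1) r i by simp
    also have "\<dots> = (\<Sum>k\<in>{0..<n}. P $$ (r,k) * L $$ (k,i))"
      unfolding SP using P(1) L r i by (simp add: scalar_prod_def)
    also have "\<dots> = (\<Sum>k\<in>{0..<n}. if k = i then P $$ (r,i) * L $$ (i,i) else 0)"
      using dgL L i by (intro sum.cong) (auto simp: diagonal_mat_def)
    finally show "(S *\<^sub>v col P i) $ r = (L $$ (i,i) \<cdot>\<^sub>v col P i) $ r" using r P(1) i by simp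
  qed (use S P(1) in simp)
  then show ?thesis by (rule that[OF P])
qed

lemma psd_eigenvalue_nonneg:
  fixes S :: "real mat"
  assumes S: "S \<in> carrier_mat n n" and psd: "psd_mat S"
    and x: "x \<in> carrier_vec n" "x \<noteq> 0\<^sub>v n" and Sx: "S *\<^sub>v x = d \<cdot>\<^sub>v x"
  shows "d \<ge> 0"
proof -
  have "0 \<le> x \<bullet> (S *\<^sub>v x)" using psd S x unfolding psd_mat_def by auto
  also have "\<dots> = d * (x \<bullet> x)" unfolding Sx using x by simp
  finally show ?thesis using scalar_prod_self_pos[OF x] by (simp add: zero_le_mult_iff)
qed

lemma psd_sqrt_on_eigenvector:
  fixes T :: "real mat"
  assumes T: "T \<in> carrier_mat n n" and sym: "T\<^sup>T = T" and psd: "psd_mat T"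
    and x: "x \<in> carrier_vec n" and mu: "mu \<ge> 0"
    and TTx: "T *\<^sub>v (T *\<^sub>v x) = (mu * mu) \<cdot>\<^sub>v x"
  shows "T *\<^sub>v x = mu \<cdot>\<^sub>v x"
proof -
  (* T e = - mu e, which psd of T and mu \<ge> 0 only allow for e = 0. *)
  define e where "e = T *\<^sub>v x - mu \<cdot>\<^sub>v x"
  have e: "e \<in> carrier_vec n" unfolding e_def using T x by auto
  have "T *\<^sub>v e = T *\<^sub>v (T *\<^sub>v x) - mu \<cdot>\<^sub>v (T *\<^sub>v x)"
    unfolding e_def using T x by (simp add: mult_minus_distrib_mat_vec[of _ n n] mult_mat_vec[of _ n n])
  then have "T *\<^sub>v e + mu \<cdot>\<^sub>v e = 0\<^sub>v n"
    unfolding TTx e_def using T x by (intro eq_vecI) (auto simp: algebra_simps)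
  then have "e \<bullet> (T *\<^sub>v e + mu \<cdot>\<^sub>v e) = 0" using e by simp
  then have eq0: "e \<bullet> (T *\<^sub>v e) + mu * (e \<bullet> e) = 0"
    using e T by (simp add: scalar_prod_add_distrib[of e n])
  have eTe: "e \<bullet> (T *\<^sub>v e) \<ge> 0" using psd e T unfolding psd_mat_def by auto
  have "e \<bullet> e = 0"
  proof (cases "mu = 0")
    case True
    then have "e = T *\<^sub>v x" unfolding e_def using T x by (intro eq_vecI) auto
    then have "e \<bullet> e = x \<bullet> (T\<^sup>T *\<^sub>v (T *\<^sub>v x))"
      using transpose_vec_mult_scalar[OF T x, of "T *\<^sub>v x"] T x
      by (simp add: comm_scalar_prod[of _ n])
    then show ?thesis unfolding sym TTx using True x by simp
  next
    case False
    have "0 \<le> mu * (e \<bullet> e)" using mu scalar_prod_self_nonneg[of e] by simp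
    then have "mu * (e \<bullet> e) = 0" using eq0 eTe by linarith
    then show ?thesis using False by simp
  qed
  then have e0: "e = 0\<^sub>v n" using scalar_prod_self_pos[OF e] by force
  show ?thesis
  proof (rule eq_vecI)
    fix r assume r: "r < dim_vec (mu \<cdot>\<^sub>v x)"
    then have "e $ r = 0" using e0 x by simp
    then show "(T *\<^sub>v x) $ r = (mu \<cdot>\<^sub>v x) $ r" unfolding e_def using T x r by simp
  qed (use T x in simp)
qed

lemma psd_sqrt_unique:
  fixes T R :: "real mat"
  assumes T: "T \<in> carrier_mat n n" "T\<^sup>T = T" "psd_mat T"
    and R: "R \<in> carrier_mat n n" "R\<^sup>T = R" "psd_mat R"
    and TR: "T * T = R * R"
  shows "T = R"
proof -
  have "(T * T)\<^sup>T = T * T" using T by (simp add: transpose_mult)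
  then obtain P d where P: "P \<in> carrier_mat n n" "P\<^sup>T * P = 1\<^sub>m n"
    and eig: "\<And>i. i < n \<Longrightarrow> (T * T) *\<^sub>v col P i = d i \<cdot>\<^sub>v col P i"
    using real_symmetric_eigenbasis[of "T * T" n] T by auto
  show ?thesis
  proof (rule mat_eq_on_orthonormal_basis[OF T(1) R(1) P])
    fix i assume i: "i < n"
    have c: "col P i \<in> carrier_vec n" "col P i \<noteq> 0\<^sub>v n"
      using orthonormal_col[OF P i] P i by auto
    have "psd_mat (T * T)" unfolding psd_mat_def
    proof
      fix v :: "real vec" assume "v \<in> carrier_vec (dim_row (T * T))"
      then have v: "v \<in> carrier_vec n" using T by simp
      have "v \<bullet> ((T * T) *\<^sub>v v) = (T *\<^sub>v v) \<bullet> (T *\<^sub>v v)"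
        using transpose_vec_mult_scalar[OF T(1) _ v, of "T *\<^sub>v v"] T v
        by (simp add: assoc_mult_mat_vec[of _ n n _ n] comm_scalar_prod[of _ n])
      then show "v \<bullet> ((T * T) *\<^sub>v v) \<ge> 0" using scalar_prod_self_nonneg by simp
    qed
    then have d: "d i \<ge> 0" using psd_eigenvalue_nonneg[OF _ _ c eig[OF i]] T by auto
    have sq: "d i = sqrt (d i) * sqrt (d i)" using d by simp
    have "X *\<^sub>v col P i = sqrt (d i) \<cdot>\<^sub>v col P i"
      if "X \<in> carrier_mat n n" "X\<^sup>T = X" "psd_mat X" "X * X = T * T" for X
      using psd_sqrt_on_eigenvector[OF that(1-3) c(1)] eig[OF i] that(1,4) c(1) sq
      by (simp add: assoc_mult_mat_vec[symmetric, of X n n X n])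
    then show "T *\<^sub>v col P i = R *\<^sub>v col P i" using T R TR by metis
  qed
qed

lemma diagonal_mult_vec_index:
  fixes D :: "real mat"
  assumes D: "D \<in> carrier_mat n n" "diagonal_mat D" and w: "w \<in> carrier_vec n" and i: "i < n"
  shows "(D *\<^sub>v w) $ i = D $$ (i,i) * w $ i"
proof -
  have "(D *\<^sub>v w) $ i = (\<Sum>k\<in>{0..<n}. D $$ (i,k) * w $ k)" using D w i by (simp add: scalar_prod_def)
  also have "\<dots> = (\<Sum>k\<in>{0..<n}. if k = i then D $$ (i,i) * w $ i else 0)"
    using D i unfolding diagonal_mat_def by (intro sum.cong) auto
  finally show ?thesis using i by simp
qed

lemma nonneg_diagonal_psd_mat:
  fixes D :: "real mat"
  assumes D: "D \<in> carrier_mat n n" "diagonal_mat D" and nonneg: "\<And>i. i < n \<Longrightarrow> D $$ (i,i) \<ge> 0"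
  shows "psd_mat D"
  unfolding psd_mat_def
proof
  fix v :: "real vec" assume "v \<in> carrier_vec (dim_row D)"
  then have v: "v \<in> carrier_vec n" using D by simp
  have "v \<bullet> (D *\<^sub>v v) = (\<Sum>i\<in>{0..<n}. D $$ (i,i) * (v $ i * v $ i))"
    using v D diagonal_mult_vec_index[OF D v] by (simp add: scalar_prod_def ac_simps)
  also have "\<dots> \<ge> 0"
  proof (rule sum_nonneg)
    show "0 \<le> D $$ (i,i) * (v $ i * v $ i)" if "i \<in> {0..<n}" for i
      using nonneg that by (intro mult_nonneg_nonneg[of "D $$ (i,i)"]) auto
  qed
  finally show "v \<bullet> (D *\<^sub>v v) \<ge> 0" .
qed

lemma psd_mat_congruence:
  fixes X P :: "real mat"
  assumes X: "X \<in> carrier_mat n n" "psd_mat X" and P: "P \<in> carrier_mat n n"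
  shows "psd_mat (P * X * P\<^sup>T)"
  unfolding psd_mat_def
proof
  fix v :: "real vec" assume "v \<in> carrier_vec (dim_row (P * X * P\<^sup>T))"
  then have v: "v \<in> carrier_vec n" using P by simp
  define w where "w = P\<^sup>T *\<^sub>v v"
  have w: "w \<in> carrier_vec n" unfolding w_def using P v by auto
  have "v \<bullet> ((P * X * P\<^sup>T) *\<^sub>v v) = w \<bullet> (X *\<^sub>v w)"
    unfolding w_def using P X v transpose_vec_mult_scalar[of P n n "X *\<^sub>v (P\<^sup>T *\<^sub>v v)" v]
    by (simp add: assoc_mult_mat_vec[of _ n n _ n] comm_scalar_prod[of _ n])
  then show "v \<bullet> ((P * X * P\<^sup>T) *\<^sub>v v) \<ge> 0" using X w unfolding psd_mat_def by auto
qed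

lemma psd_sqrt_exists:
  fixes S :: "real mat"
  assumes S: "S \<in> carrier_mat n n" and sym: "S\<^sup>T = S" and psd: "psd_mat S"
  shows "\<exists>R. R \<in> carrier_mat n n \<and> R\<^sup>T = R \<and> psd_mat R \<and> R * R = S"
proof -
  obtain P d where P: "P \<in> carrier_mat n n" "P\<^sup>T * P = 1\<^sub>m n"
    and eig: "\<And>i. i < n \<Longrightarrow> S *\<^sub>v col P i = d i \<cdot>\<^sub>v col P i"
    using real_symmetric_eigenbasis[OF S sym] by auto
  have d: "d i \<ge> 0" if "i < n" for i
    using psd_eigenvalue_nonneg[OF S psd _ orthonormal_col(2)[OF P that] eig[OF that]] P that
    by auto
  define Dh where "Dh = mat n n (\<lambda>(i,k). if i = k then sqrt (d i) else 0)"
  define R where "R = P * Dh * P\<^sup>T"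
  have Dh: "Dh \<in> carrier_mat n n" "Dh\<^sup>T = Dh" "diagonal_mat Dh"
    unfolding Dh_def by (auto simp: diagonal_mat_def)
  have R: "R \<in> carrier_mat n n" unfolding R_def using P Dh by auto
  have Rcol: "R *\<^sub>v col P i = sqrt (d i) \<cdot>\<^sub>v col P i" if i: "i < n" for i
  proof -
    have "Dh *\<^sub>v unit_vec n i = sqrt (d i) \<cdot>\<^sub>v unit_vec n i"
      unfolding Dh_def using i by (intro eq_vecI) auto
    moreover have "P *\<^sub>v unit_vec n i = col P i"
      using P i by (intro eq_vecI) (auto simp: row_def col_def)
    ultimately show ?thesis
      unfolding R_def using P Dh i orthonormal_col(1)[OF P i]
      by (simp add: assoc_mult_mat_vec[of _ n n _ n] mult_mat_vec[of _ n n])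
  qed
  have "R\<^sup>T = P\<^sup>T\<^sup>T * (P * Dh)\<^sup>T"
    unfolding R_def by (rule transpose_mult) (use P Dh in auto)
  also have "(P * Dh)\<^sup>T = Dh\<^sup>T * P\<^sup>T" by (rule transpose_mult) (use P Dh in auto)
  finally have "R\<^sup>T = R"
    unfolding R_def using P Dh by (simp add: assoc_mult_mat[of _ n n _ n _ n])
  moreover have "R * R = S"
  proof (rule mat_eq_on_orthonormal_basis[OF _ S P])
    fix i assume i: "i < n"
    then show "(R * R) *\<^sub>v col P i = S *\<^sub>v col P i"
      using R P Rcol eig d[OF i]
      by (simp add: assoc_mult_mat_vec[of _ n n _ n] mult_mat_vec[of _ n n] smult_smult_assoc)
  qed (use R in auto)
  moreover have "psd_mat R"
  proof -
    have "psd_mat Dh" by (rule nonneg_diagonal_psd_mat[OF Dh(1,3)]) (simp add: Dh_def d)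
    then show ?thesis unfolding R_def by (rule psd_mat_congruence[OF Dh(1) _ P(1)])
  qed
  ultimately show ?thesis using R by blast
qed

lemma mat_sqrt:
  fixes S :: "real mat"
  assumes S: "S \<in> carrier_mat n n" and sym: "S\<^sup>T = S" and psd: "psd_mat S"
  shows "mat_sqrt S \<in> carrier_mat n n" "(mat_sqrt S)\<^sup>T = mat_sqrt S"
    "mat_sqrt S * mat_sqrt S = S"
proof -
  have "\<exists>!R. R \<in> carrier_mat (dim_row S) (dim_row S) \<and> R\<^sup>T = R \<and> psd_mat R \<and> R * R = S"
    using psd_sqrt_exists[OF assms] psd_sqrt_unique[of _ n] S by auto
  from theI'[OF this] show "mat_sqrt S \<in> carrier_mat n n" "(mat_sqrt S)\<^sup>T = mat_sqrt S"
    "mat_sqrt S * mat_sqrt S = S" unfolding mat_sqrt_def using S by auto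
qed

section \<open>Positive definite matrices, inverses and regression\<close>

definition pd_mat :: "real mat \<Rightarrow> bool" where
  "pd_mat S \<longleftrightarrow> (\<forall>v \<in> carrier_vec (dim_row S). v \<noteq> 0\<^sub>v (dim_row S) \<longrightarrow> v \<bullet> (S *\<^sub>v v) > 0)"

lemma mat_inv_nonsingular:
  fixes X :: "real mat"
  assumes X: "X \<in> carrier_mat n n"
    and inj: "\<And>v. v \<in> carrier_vec n \<Longrightarrow> X *\<^sub>v v = 0\<^sub>v n \<Longrightarrow> v = 0\<^sub>v n"
  shows "mat_inv X \<in> carrier_mat n n" "X * mat_inv X = 1\<^sub>m n" "mat_inv X * X = 1\<^sub>m n"
    "invertible_mat X"
proof -
  have "det X \<noteq> 0" using det_0_iff_vec_prod_zero_field[OF X] inj by auto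
  from det_non_zero_imp_unit[OF X this, of "()"]
  have "X \<in> Units (ring_mat TYPE(real) n ())" .
  then have "mat_inverse X \<noteq> None" using mat_inverse(1)[OF X, of "()"] by auto
  then obtain B where B: "mat_inverse X = Some B" by auto
  have XB: "X * B = 1\<^sub>m n" "B * X = 1\<^sub>m n" "B \<in> carrier_mat n n"
    using mat_inverse(2)[OF X B] by auto
  then show "mat_inv X \<in> carrier_mat n n" "X * mat_inv X = 1\<^sub>m n" "mat_inv X * X = 1\<^sub>m n"
    unfolding mat_inv_def B by auto
  show "invertible_mat X" unfolding invertible_mat_def inverts_mat_def square_mat.simps
    using XB X by (intro conjI exI[of _ B]) auto
qed

lemma pd_mat_nonsingular:
  assumes "S \<in> carrier_mat n n" "pd_mat S" "v \<in> carrier_vec n" "S *\<^sub>v v = 0\<^sub>v n"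
  shows "v = 0\<^sub>v n"
proof (rule ccontr)
  assume "v \<noteq> 0\<^sub>v n"
  then have "v \<bullet> (S *\<^sub>v v) > 0" using assms unfolding pd_mat_def by auto
  then show False using assms by simp
qed

lemma psd_mat_inv:
  fixes D :: "real mat"
  assumes D: "D \<in> carrier_mat n n" "psd_mat D"
    and Di: "Di \<in> carrier_mat n n" "D * Di = 1\<^sub>m n"
  shows "psd_mat Di"
  unfolding psd_mat_def
proof
  fix z :: "real vec" assume "z \<in> carrier_vec (dim_row Di)"
  then have z: "z \<in> carrier_vec n" using Di by simp
  define x where "x = Di *\<^sub>v z"
  have x: "x \<in> carrier_vec n" unfolding x_def using Di z by auto
  have "(D * Di) *\<^sub>v z = D *\<^sub>v x"
    unfolding x_def by (rule assoc_mult_mat_vec) (use D Di z in auto)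
  then have "D *\<^sub>v x = z" using Di z by simp
  then have "z \<bullet> (Di *\<^sub>v z) = x \<bullet> (D *\<^sub>v x)"
    unfolding x_def[symmetric] using comm_scalar_prod[of x n z] x z by simp
  then show "z \<bullet> (Di *\<^sub>v z) \<ge> 0" using D x unfolding psd_mat_def by auto
qed

lemma positive_diagonal_pd_mat:
  fixes D :: "real mat"
  assumes D: "D \<in> carrier_mat n n" "diagonal_mat D" and pos: "\<And>i. i < n \<Longrightarrow> D $$ (i,i) > 0"
  shows "pd_mat D"
  unfolding pd_mat_def
proof (intro ballI impI)
  fix v :: "real vec" assume "v \<in> carrier_vec (dim_row D)" "v \<noteq> 0\<^sub>v (dim_row D)"
  then have v: "v \<in> carrier_vec n" "v \<noteq> 0\<^sub>v n" using D by auto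
  then obtain i where i: "i < n" "v $ i \<noteq> 0" by (metis eq_vecI carrier_vecD index_zero_vec)
  have "v \<bullet> (D *\<^sub>v v) = (\<Sum>i\<in>{0..<n}. D $$ (i,i) * (v $ i * v $ i))"
    using v D diagonal_mult_vec_index[OF D v(1)] by (simp add: scalar_prod_def ac_simps)
  also have "\<dots> > 0"
  proof (rule sum_pos2[of _ i])
    have "0 < v $ i * v $ i" using i(2) not_real_square_gt_zero by blast
    then show "0 < D $$ (i,i) * (v $ i * v $ i)" by (rule mult_pos_pos[OF pos[OF i(1)]])
    show "0 \<le> D $$ (k,k) * (v $ k * v $ k)" if "k \<in> {0..<n}" for k
      using pos that by (intro mult_nonneg_nonneg[of "D $$ (k,k)"]) (auto simp: less_imp_le)
  qed (use i in auto)
  finally show "v \<bullet> (D *\<^sub>v v) > 0" .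
qed

lemma pd_mat_imp_psd_mat:
  assumes "pd_mat S"
  shows "psd_mat S"
  unfolding psd_mat_def
proof
  fix v :: "real vec" assume "v \<in> carrier_vec (dim_row S)"
  then show "v \<bullet> (S *\<^sub>v v) \<ge> 0"
    using assms unfolding pd_mat_def
    by (cases "v = 0\<^sub>v (dim_row S)") (auto simp: less_imp_le scalar_prod_def)
qed

lemma psd_add_pd_mat:
  assumes S: "S \<in> carrier_mat n n" "psd_mat S" and D: "D \<in> carrier_mat n n" "pd_mat D"
  shows "pd_mat (S + D)"
  unfolding pd_mat_def
proof (intro ballI impI)
  fix v :: "real vec" assume "v \<in> carrier_vec (dim_row (S + D))" "v \<noteq> 0\<^sub>v (dim_row (S + D))"
  then have v: "v \<in> carrier_vec n" "v \<noteq> 0\<^sub>v n" using S D by auto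
  have "v \<bullet> ((S + D) *\<^sub>v v) = v \<bullet> (S *\<^sub>v v) + v \<bullet> (D *\<^sub>v v)"
    using S D v by (simp add: add_mult_distrib_mat_vec[of _ n n] scalar_prod_add_distrib[of v n])
  moreover have "v \<bullet> (S *\<^sub>v v) \<ge> 0" using S v unfolding psd_mat_def by auto
  moreover have "v \<bullet> (D *\<^sub>v v) > 0" using D v unfolding pd_mat_def by auto
  ultimately show "v \<bullet> ((S + D) *\<^sub>v v) > 0" by simp
qed

lemma identity_plus_psd_congruence_nonsingular:
  fixes B Di :: "real mat"
  assumes B: "B \<in> carrier_mat q k" and Di: "Di \<in> carrier_mat q q" "psd_mat Di"
    and v: "v \<in> carrier_vec k" and Gv: "(1\<^sub>m k + B\<^sup>T * Di * B) *\<^sub>v v = 0\<^sub>v k"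
  shows "v = 0\<^sub>v k"
proof (rule ccontr)
  assume nz: "v \<noteq> 0\<^sub>v k"
  define z where "z = B *\<^sub>v v"
  have z: "z \<in> carrier_vec q" unfolding z_def using B v by auto
  have Gexp: "(1\<^sub>m k + B\<^sup>T * Di * B) *\<^sub>v v = v + B\<^sup>T *\<^sub>v (Di *\<^sub>v z)"
    unfolding z_def using B Di v
    by (simp add: add_mult_distrib_mat_vec[of _ k k] assoc_mult_mat_vec[of _ k q _ k]
        assoc_mult_mat_vec[of _ q q _ k])
  have "v + B\<^sup>T *\<^sub>v (Di *\<^sub>v z) = 0\<^sub>v k" using Gv unfolding Gexp .
  then have "v \<bullet> (v + B\<^sup>T *\<^sub>v (Di *\<^sub>v z)) = 0" using v by simp
  then have "0 = v \<bullet> v + v \<bullet> (B\<^sup>T *\<^sub>v (Di *\<^sub>v z))"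
    using v B Di z by (simp add: scalar_prod_add_distrib[of v k])
  also have "v \<bullet> (B\<^sup>T *\<^sub>v (Di *\<^sub>v z)) = z \<bullet> (Di *\<^sub>v z)"
    using transpose_vec_mult_scalar[OF B v, of "Di *\<^sub>v z"] B Di v z
    by (simp add: comm_scalar_prod[of _ k] comm_scalar_prod[of _ q] z_def[symmetric])
  finally have "v \<bullet> v = - (z \<bullet> (Di *\<^sub>v z))" by simp
  moreover have "z \<bullet> (Di *\<^sub>v z) \<ge> 0" using Di z unfolding psd_mat_def by auto
  ultimately have "v \<bullet> v \<le> 0" by simp
  then show False using scalar_prod_self_pos[OF v nz] by simp
qed

lemma woodbury_solution:
  fixes B D Di Gi :: "real mat"
  assumes B: "B \<in> carrier_mat q k" and D: "D \<in> carrier_mat q q"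
    and Di: "Di \<in> carrier_mat q q" "D * Di = 1\<^sub>m q"
    and Gi: "Gi \<in> carrier_mat k k" "(1\<^sub>m k + B\<^sup>T * Di * B) * Gi = 1\<^sub>m k"
    and a: "a \<in> carrier_vec k"
  shows "(B * B\<^sup>T + D) *\<^sub>v (Di *\<^sub>v (B *\<^sub>v (Gi *\<^sub>v a))) = B *\<^sub>v a"
proof -
  define g where "g = Gi *\<^sub>v a"
  define H where "H = B\<^sup>T * Di * B"
  have g: "g \<in> carrier_vec k" unfolding g_def using Gi a by auto
  have H: "H \<in> carrier_mat k k" unfolding H_def using B Di by auto
  have "(1\<^sub>m k + H) *\<^sub>v g = ((1\<^sub>m k + H) * Gi) *\<^sub>v a"
    unfolding g_def using H Gi a by (simp add: assoc_mult_mat_vec[of _ k k _ k])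
  then have Hg: "g + H *\<^sub>v g = a"
    using Gi a H g unfolding H_def[symmetric] by (simp add: add_mult_distrib_mat_vec[of _ k k])
  have Dal: "D *\<^sub>v (Di *\<^sub>v (B *\<^sub>v g)) = B *\<^sub>v g"
    using D Di B g by (simp add: assoc_mult_mat_vec[symmetric, of D q q Di q])
  have Bal: "B\<^sup>T *\<^sub>v (Di *\<^sub>v (B *\<^sub>v g)) = H *\<^sub>v g"
    unfolding H_def using Di B g
    by (simp add: assoc_mult_mat_vec[of _ k q _ k] assoc_mult_mat_vec[of _ k q _ q])
  have "(B * B\<^sup>T + D) *\<^sub>v (Di *\<^sub>v (B *\<^sub>v g)) = B *\<^sub>v (H *\<^sub>v g) + B *\<^sub>v g"
    using B D Di g Dal Bal
    by (simp add: add_mult_distrib_mat_vec[of _ q q] assoc_mult_mat_vec[of _ q k _ q])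
  also have "\<dots> = B *\<^sub>v a"
    using B H g by (simp add: Hg[symmetric] mult_add_distrib_mat_vec[of _ q k] comm_add_vec[of _ q])
  finally show ?thesis unfolding g_def .
qed

lemma pd_mat_solution_weight_pos:
  fixes S :: "real mat" and w :: "real vec"
  assumes S: "S \<in> carrier_mat p p" "pd_mat S" and j: "j < p"
    and w: "w \<in> carrier_vec p" "w $ j = 1" and Sw: "S *\<^sub>v w = t \<cdot>\<^sub>v unit_vec p j"
  shows "t > 0"
proof -
  have "w \<noteq> 0\<^sub>v p" using w j by auto
  then have "0 < w \<bullet> (S *\<^sub>v w)" using S w unfolding pd_mat_def by auto
  also have "\<dots> = t" unfolding Sw using w j by simp
  finally show ?thesis .
qed

lemma mat_inv_row_of_solution:
  fixes S :: "real mat" and w :: "real vec"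
  assumes S: "S \<in> carrier_mat p p" "S\<^sup>T = S" "pd_mat S" and j: "j < p"
    and w: "w \<in> carrier_vec p" "w $ j = 1" and Sw: "S *\<^sub>v w = t \<cdot>\<^sub>v unit_vec p j"
    and l: "l < p"
  shows "mat_inv S $$ (j, l) = w $ l / t"
proof -
  let ?Th = "mat_inv S"
  note Th = mat_inv_nonsingular[OF S(1) pd_mat_nonsingular[OF S(1) S(3)]]
  have t: "t > 0" by (rule pd_mat_solution_weight_pos[OF S(1,3) j w Sw])
  have "(S * ?Th)\<^sup>T = ?Th\<^sup>T * S\<^sup>T" by (rule transpose_mult) (use S Th in auto)
  then have ThS: "?Th\<^sup>T * S = 1\<^sub>m p" using Th(2) S(2) by simp
  have "w = (?Th\<^sup>T * S) *\<^sub>v w" unfolding ThS using w by simp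
  also have "\<dots> = t \<cdot>\<^sub>v (?Th\<^sup>T *\<^sub>v unit_vec p j)"
    using S Th w Sw by (simp add: assoc_mult_mat_vec[of _ p p _ p] mult_mat_vec[of _ p p])
  finally have "w $ l = t * ?Th $$ (j, l)" using Th l j by simp
  then show ?thesis using t by simp
qed

lemma pd_quadratic_form_min:
  fixes S :: "real mat" and w v :: "real vec"
  assumes S: "S \<in> carrier_mat p p" "S\<^sup>T = S" "pd_mat S" and j: "j < p"
    and w: "w \<in> carrier_vec p" "w $ j = 1" and Sw: "S *\<^sub>v w = t \<cdot>\<^sub>v unit_vec p j"
    and v: "v \<in> carrier_vec p" "v $ j = 1"
  shows "w \<bullet> (S *\<^sub>v w) \<le> v \<bullet> (S *\<^sub>v v)" and "v \<bullet> (S *\<^sub>v v) \<le> w \<bullet> (S *\<^sub>v w) \<Longrightarrow> v = w"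
proof -
  define d where "d = v - w"
  have d: "d \<in> carrier_vec p" "d $ j = 0" unfolding d_def using v w j by auto
  have vwd: "v = w + d" unfolding d_def using v w by auto
  have "w \<bullet> (S *\<^sub>v d) = d \<bullet> (S *\<^sub>v w)"
    using transpose_vec_mult_scalar[OF S(1) d(1) w(1)] S w d by (simp add: comm_scalar_prod[of _ p])
  also have "\<dots> = 0" unfolding Sw using d j by simp
  finally have cross: "w \<bullet> (S *\<^sub>v d) = 0" .
  have decomp: "v \<bullet> (S *\<^sub>v v) = w \<bullet> (S *\<^sub>v w) + d \<bullet> (S *\<^sub>v d)"
    unfolding vwd using S w d cross \<open>d \<bullet> (S *\<^sub>v w) = 0\<close>
    by (simp add: mult_add_distrib_mat_vec[of _ p p] add_scalar_prod_distrib[of _ p]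
        scalar_prod_add_distrib[of _ p])
  have pos: "d \<bullet> (S *\<^sub>v d) > 0" if "d \<noteq> 0\<^sub>v p"
    using S d that unfolding pd_mat_def by auto
  have "d \<bullet> (S *\<^sub>v d) \<ge> 0"
    using pos S d by (cases "d = 0\<^sub>v p") (auto simp: less_imp_le)
  then show "w \<bullet> (S *\<^sub>v w) \<le> v \<bullet> (S *\<^sub>v v)" using decomp by simp
  assume "v \<bullet> (S *\<^sub>v v) \<le> w \<bullet> (S *\<^sub>v w)"
  then have "d = 0\<^sub>v p" using pos decomp by fastforce
  then show "v = w" using vwd w by simp
qed

lemma quadratic_form_double_sum:
  fixes S :: "real mat"
  assumes S: "S \<in> carrier_mat n n" and x: "x \<in> carrier_vec n" and z: "z \<in> carrier_vec n"
  shows "x \<bullet> (S *\<^sub>v z) = (\<Sum>k<n. \<Sum>l<n. x $ k * z $ l * S $$ (k,l))"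
proof -
  have "x \<bullet> (S *\<^sub>v z) = (\<Sum>k<n. x $ k * (\<Sum>l<n. S $$ (k,l) * z $ l))"
    using S x z by (simp add: scalar_prod_def atLeast0LessThan)
  also have "\<dots> = (\<Sum>k<n. \<Sum>l<n. x $ k * z $ l * S $$ (k,l))"
    by (simp add: sum_distrib_left mult.commute mult.left_commute)
  finally show ?thesis .
qed

lemma mult_mat_vec_index_sum:
  assumes "X \<in> carrier_mat m n" "v \<in> carrier_vec n" "i < m"
  shows "(X *\<^sub>v v) $ i = (\<Sum>l<n. X $$ (i, l) * v $ l)"
  using assms by (simp add: scalar_prod_def atLeast0LessThan)

section \<open>Second moments\<close>

lemma cov_commute: "cov M X Y = cov M Y X"
  unfolding cov_def by (simp add: mult.commute)

lemma cov_mat_transpose: "(cov_mat M X n)\<^sup>T = cov_mat M X n"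
  by (rule eq_matI) (auto simp: cov_mat_def cov_commute)

definition square_integrable :: "'a measure \<Rightarrow> ('a \<Rightarrow> real) \<Rightarrow> bool" where
  "square_integrable M X \<longleftrightarrow> X \<in> borel_measurable M \<and> integrable M (\<lambda>\<omega>. (X \<omega>)\<^sup>2)"

context prob_space
begin

lemma square_integrable_integrable: "square_integrable M X \<Longrightarrow> integrable M X"
  unfolding square_integrable_def by (auto intro: square_integrable_imp_integrable)

lemma square_integrable_mult_integrable:
  assumes "square_integrable M X" "square_integrable M Y"
  shows "integrable M (\<lambda>\<omega>. X \<omega> * Y \<omega>)"
proof (rule Bochner_Integration.integrable_bound[of _ "\<lambda>\<omega>. (X \<omega>)\<^sup>2 + (Y \<omega>)\<^sup>2"])
  show "integrable M (\<lambda>\<omega>. (X \<omega>)\<^sup>2 + (Y \<omega>)\<^sup>2)" "(\<lambda>\<omega>. X \<omega> * Y \<omega>) \<in> borel_measurable M"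
    using assms unfolding square_integrable_def by auto
  have "\<bar>X \<omega> * Y \<omega>\<bar> \<le> (X \<omega>)\<^sup>2 + (Y \<omega>)\<^sup>2" for \<omega>
  proof -
    have "0 \<le> (\<bar>X \<omega>\<bar> - \<bar>Y \<omega>\<bar>)\<^sup>2" by simp
    also have "\<dots> = (X \<omega>)\<^sup>2 + (Y \<omega>)\<^sup>2 - 2 * \<bar>X \<omega> * Y \<omega>\<bar>"
      by (simp add: power2_eq_square algebra_simps abs_mult)
    finally show ?thesis by simp
  qed
  then show "AE \<omega> in M. norm (X \<omega> * Y \<omega>) \<le> norm ((X \<omega>)\<^sup>2 + (Y \<omega>)\<^sup>2)" by simp
qed

lemma square_integrable_add:
  assumes "square_integrable M X" "square_integrable M Y"
  shows "square_integrable M (\<lambda>\<omega>. X \<omega> + Y \<omega>)"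
proof -
  have "(\<lambda>\<omega>. (X \<omega> + Y \<omega>)\<^sup>2) = (\<lambda>\<omega>. (X \<omega>)\<^sup>2 + 2 * (X \<omega> * Y \<omega>) + (Y \<omega>)\<^sup>2)"
    by (auto simp: power2_eq_square algebra_simps)
  then show ?thesis
    using assms square_integrable_mult_integrable[OF assms] unfolding square_integrable_def by auto
qed

lemma square_integrable_cmult: "square_integrable M X \<Longrightarrow> square_integrable M (\<lambda>\<omega>. c * X \<omega>)"
  unfolding square_integrable_def by (auto simp: power_mult_distrib)

lemma square_integrable_const: "square_integrable M (\<lambda>\<omega>. c)"
  unfolding square_integrable_def by auto

lemma square_integrable_diff:
  "square_integrable M X \<Longrightarrow> square_integrable M Y \<Longrightarrow> square_integrable M (\<lambda>\<omega>. X \<omega> - Y \<omega>)"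
  using square_integrable_add[of X "\<lambda>\<omega>. (-1) * Y \<omega>"] square_integrable_cmult[of Y "-1"] by simp

lemma square_integrable_sum:
  "finite S \<Longrightarrow> (\<And>a. a \<in> S \<Longrightarrow> square_integrable M (X a)) \<Longrightarrow>
    square_integrable M (\<lambda>\<omega>. \<Sum>a\<in>S. X a \<omega>)"
  by (induction S rule: finite_induct) (auto intro: square_integrable_add square_integrable_const)

lemma integral_sum_mult_sum:
  assumes "finite S" "finite T" "\<And>a. a \<in> S \<Longrightarrow> square_integrable M (X a)"
    "\<And>b. b \<in> T \<Longrightarrow> square_integrable M (Y b)"
  shows "(\<integral>\<omega>. (\<Sum>a\<in>S. c a * X a \<omega>) * (\<Sum>b\<in>T. d b * Y b \<omega>) \<partial>M)
       = (\<Sum>a\<in>S. \<Sum>b\<in>T. c a * d b * (\<integral>\<omega>. X a \<omega> * Y b \<omega> \<partial>M))"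
proof -
  have "(\<lambda>\<omega>. (\<Sum>a\<in>S. c a * X a \<omega>) * (\<Sum>b\<in>T. d b * Y b \<omega>))
      = (\<lambda>\<omega>. \<Sum>a\<in>S. \<Sum>b\<in>T. c a * d b * (X a \<omega> * Y b \<omega>))"
    by (auto simp: sum_product algebra_simps)
  moreover have int: "integrable M (\<lambda>\<omega>. c a * d b * (X a \<omega> * Y b \<omega>))" if "a \<in> S" "b \<in> T" for a b
    using square_integrable_mult_integrable assms that by auto
  ultimately have "(\<integral>\<omega>. (\<Sum>a\<in>S. c a * X a \<omega>) * (\<Sum>b\<in>T. d b * Y b \<omega>) \<partial>M)
      = (\<Sum>a\<in>S. \<integral>\<omega>. (\<Sum>b\<in>T. c a * d b * (X a \<omega> * Y b \<omega>)) \<partial>M)"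
    by (simp add: Bochner_Integration.integral_sum integrable_sum)
  also have "\<dots> = (\<Sum>a\<in>S. \<Sum>b\<in>T. \<integral>\<omega>. c a * d b * (X a \<omega> * Y b \<omega>) \<partial>M)"
    using int by (intro sum.cong refl Bochner_Integration.integral_sum) auto
  finally show ?thesis by simp
qed

lemma integral_centered_sum_square:
  assumes X: "\<And>l. l < n \<Longrightarrow> square_integrable M (\<lambda>\<omega>. X \<omega> l)" and w: "w \<in> carrier_vec n"
  shows "(\<integral>\<omega>. (\<Sum>l<n. w $ l * (X \<omega> l - (\<integral>\<omega>'. X \<omega>' l \<partial>M)))\<^sup>2 \<partial>M)
    = w \<bullet> (cov_mat M X n *\<^sub>v w)"
proof -
  have "(\<integral>\<omega>. (\<Sum>l<n. w $ l * (X \<omega> l - (\<integral>\<omega>'. X \<omega>' l \<partial>M)))\<^sup>2 \<partial>M)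
      = (\<Sum>l<n. \<Sum>m<n. w $ l * w $ m * cov M (\<lambda>\<omega>. X \<omega> l) (\<lambda>\<omega>. X \<omega> m))"
    unfolding power2_eq_square cov_def
    by (rule integral_sum_mult_sum) (auto intro: square_integrable_diff X square_integrable_const)
  also have "\<dots> = w \<bullet> (cov_mat M X n *\<^sub>v w)"
    using quadratic_form_double_sum[of "cov_mat M X n" n w w] w by (simp add: cov_mat_def)
  finally show ?thesis .
qed

lemma cov_mat_psd:
  assumes "\<And>l. l < n \<Longrightarrow> square_integrable M (\<lambda>\<omega>. X \<omega> l)"
  shows "psd_mat (cov_mat M X n)"
  unfolding psd_mat_def
proof
  fix w :: "real vec" assume "w \<in> carrier_vec (dim_row (cov_mat M X n))"
  then have "w \<in> carrier_vec n" by (simp add: cov_mat_def)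
  then have "w \<bullet> (cov_mat M X n *\<^sub>v w)
      = (\<integral>\<omega>. (\<Sum>l<n. w $ l * (X \<omega> l - (\<integral>\<omega>'. X \<omega>' l \<partial>M)))\<^sup>2 \<partial>M)"
    using integral_centered_sum_square[OF assms] by simp
  also have "\<dots> \<ge> 0" by (rule integral_nonneg_AE) auto
  finally show "w \<bullet> (cov_mat M X n *\<^sub>v w) \<ge> 0" .
qed

lemma indep_vars_integral_mult:
  fixes X :: "nat \<Rightarrow> 'a \<Rightarrow> (nat \<Rightarrow> real)"
  assumes ind: "indep_vars (\<lambda>g. PiM (I g) (\<lambda>_. borel)) X {0, 1, 2}"
    and ab: "a \<in> {0, 1, 2}" "b \<in> {0, 1, 2}" "a \<noteq> b" and kl: "k \<in> I a" "l \<in> I b"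
    and int: "integrable M (\<lambda>\<omega>. X a \<omega> k)" "integrable M (\<lambda>\<omega>. X b \<omega> l)"
  shows "(\<integral>\<omega>. X a \<omega> k * X b \<omega> l \<partial>M) = (\<integral>\<omega>. X a \<omega> k \<partial>M) * (\<integral>\<omega>. X b \<omega> l \<partial>M)"
proof -
  define Y where "Y g x = (if g = a then x k else if g = b then x l else (0::real))"
    for g and x :: "nat \<Rightarrow> real"
  have "indep_vars (\<lambda>_. borel) (\<lambda>g \<omega>. Y g (X g \<omega>)) {0, 1, 2}"
  proof (rule indep_vars_compose2[OF ind])
    fix g :: nat
    show "Y g \<in> measurable (PiM (I g) (\<lambda>_. borel)) borel"
      unfolding Y_def using kl by (cases "g = a"; cases "g = b") auto
  qed
  then have ind2: "indep_vars (\<lambda>_. borel) (\<lambda>g \<omega>. Y g (X g \<omega>)) {a, b}"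
    by (rule indep_vars_subset) (use ab in auto)
  have int2: "integrable M (\<lambda>\<omega>. Y g (X g \<omega>))" if "g \<in> {a, b}" for g
    using that int ab unfolding Y_def by auto
  have "(\<integral>\<omega>. (\<Prod>g\<in>{a, b}. Y g (X g \<omega>)) \<partial>M) = (\<Prod>g\<in>{a, b}. \<integral>\<omega>. Y g (X g \<omega>) \<partial>M)"
    by (rule indep_vars_lebesgue_integral[OF _ ind2 int2]) auto
  then show ?thesis using ab unfolding Y_def by simp
qed

end

section \<open>Removing one coordinate\<close>

lemma insert_index_less: "j < p \<Longrightarrow> i < p - 1 \<Longrightarrow> insert_index j i < p"
  unfolding insert_index_def by auto

lemma insert_index_eq_iff: "insert_index j r = insert_index j s \<longleftrightarrow> r = s"
  unfolding insert_index_def by auto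

(* Here delete_index is the constant of Defs, which shadows the one of Jordan_Normal_Form. *)
lemma delete_insert_index_eq: "delete_index j (insert_index j i) = i"
  unfolding insert_index_def Defs.delete_index_def by auto

lemma insert_delete_index_eq: "l \<noteq> j \<Longrightarrow> insert_index j (delete_index j l) = l"
  unfolding insert_index_def Defs.delete_index_def by auto

lemma delete_index_less: "j < p \<Longrightarrow> l < p \<Longrightarrow> l \<noteq> j \<Longrightarrow> delete_index j l < p - 1"
  unfolding Defs.delete_index_def by auto

lemma sum_insert_index:
  fixes g :: "nat \<Rightarrow> 'b :: comm_monoid_add"
  assumes j: "j < p"
  shows "(\<Sum>l<p. g l) = g j + (\<Sum>i<p - 1. g (insert_index j i))"
proof -
  have "(\<Sum>l<p. g l) = g j + (\<Sum>l\<in>{..<p} - {j}. g l)" by (rule sum.remove) (use j in auto)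
  also have "{..<p} - {j} = insert_index j ` {..<p - 1}"
    using insert_index_image[of j "p - 1"] j by (simp add: atLeast0LessThan)
  also have "(\<Sum>l\<in>insert_index j ` {..<p - 1}. g l) = (\<Sum>i<p - 1. g (insert_index j i))"
    by (rule sum.reindex_cong[OF insert_index_inj_on refl refl])
  finally show ?thesis .
qed

(* residual_weights p j beta \<bullet> (y - E y) is the prediction residual
   (y_j - E y_j) - sum_i beta_i (y_(insert_index j i) - E y_(insert_index j i)). *)
definition residual_weights :: "nat \<Rightarrow> nat \<Rightarrow> real vec \<Rightarrow> real vec" where
  "residual_weights p j \<beta> = vec p (\<lambda>l. if l = j then 1 else - \<beta> $ delete_index j l)"

lemma residual_weights_carrier: "residual_weights p j \<beta> \<in> carrier_vec p"
  unfolding residual_weights_def by simp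

lemma residual_weights_self: "j < p \<Longrightarrow> residual_weights p j \<beta> $ j = 1"
  unfolding residual_weights_def by simp

lemma residual_weights_insert_index:
  "j < p \<Longrightarrow> i < p - 1 \<Longrightarrow> residual_weights p j \<beta> $ insert_index j i = - \<beta> $ i"
  unfolding residual_weights_def by (simp add: insert_index_less delete_insert_index_eq)

lemma sum_residual_weights:
  assumes j: "j < p"
  shows "(\<Sum>l<p. residual_weights p j \<beta> $ l * c l) = c j - (\<Sum>i<p - 1. c (insert_index j i) * \<beta> $ i)"
  unfolding sum_insert_index[OF j]
  by (simp add: residual_weights_self[OF j] residual_weights_insert_index[OF j] sum_negf mult.commute)

lemma mult_residual_weights_index:
  fixes S :: "real mat"
  assumes S: "S \<in> carrier_mat p p" and j: "j < p" and m: "m < p"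
  shows "(S *\<^sub>v residual_weights p j \<beta>) $ m
    = S $$ (m, j) - (\<Sum>i<p - 1. S $$ (m, insert_index j i) * \<beta> $ i)"
proof -
  have "(S *\<^sub>v residual_weights p j \<beta>) $ m = (\<Sum>l<p. residual_weights p j \<beta> $ l * S $$ (m, l))"
    using S m residual_weights_carrier[of p j \<beta>]
    by (simp add: scalar_prod_def atLeast0LessThan mult.commute)
  then show ?thesis by (simp add: sum_residual_weights[OF j])
qed

lemma residual_weights_inj:
  assumes j: "j < p" and \<beta>: "\<beta> \<in> carrier_vec (p - 1)" and \<gamma>: "\<gamma> \<in> carrier_vec (p - 1)"
    and eq: "residual_weights p j \<beta> = residual_weights p j \<gamma>"
  shows "\<beta> = \<gamma>"
proof (rule eq_vecI)
  fix i assume "i < dim_vec \<gamma>"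
  then have "i < p - 1" using \<gamma> by simp
  then show "\<beta> $ i = \<gamma> $ i"
    using arg_cong[OF eq, of "\<lambda>w. w $ insert_index j i"] residual_weights_insert_index[OF j] by simp
qed (use \<beta> \<gamma> in simp)

section \<open>The factor model\<close>

locale factor_model = prob_space M for M :: "'a measure" +
  fixes f u y :: "'a \<Rightarrow> nat \<Rightarrow> real" and A :: "real mat" and p K :: nat
  assumes A_dim: "A \<in> carrier_mat K p"
    and model: "\<And>\<omega> i. i < p \<Longrightarrow> y \<omega> i = (\<Sum>k<K. f \<omega> k * A $$ (k, i)) + u \<omega> i"
    and f_meas: "\<And>k. k < K \<Longrightarrow> (\<lambda>\<omega>. f \<omega> k) \<in> borel_measurable M"
    and u_meas: "\<And>i. i < p \<Longrightarrow> (\<lambda>\<omega>. u \<omega> i) \<in> borel_measurable M"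
    and f_L2: "\<And>k. k < K \<Longrightarrow> integrable M (\<lambda>\<omega>. (f \<omega> k)\<^sup>2)"
    and u_L2: "\<And>i. i < p \<Longrightarrow> integrable M (\<lambda>\<omega>. (u \<omega> i)\<^sup>2)"
    and u_mean: "\<And>i. i < p \<Longrightarrow> (\<integral>\<omega>. u \<omega> i \<partial>M) = 0"
    and indep: "\<And>j. j < p \<Longrightarrow> indep_vars
        (\<lambda>g. PiM (case g of 0 \<Rightarrow> {..<K} | Suc 0 \<Rightarrow> {j} | _ \<Rightarrow> {..<p} - {j}) (\<lambda>_. borel))
        (\<lambda>g \<omega>. case g of 0 \<Rightarrow> restrict (f \<omega>) {..<K}
                      | Suc 0 \<Rightarrow> restrict (u \<omega>) {j}
                      | _ \<Rightarrow> restrict (u \<omega>) ({..<p} - {j}))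
        {0, 1, 2}"
    and sigma2_pos: "\<And>j. j < p \<Longrightarrow> sigma2 M u j > 0"
begin

abbreviation Sy where "Sy \<equiv> cov_mat M y p"
abbreviation Sf where "Sf \<equiv> cov_mat M f K"

lemma f_square_integrable: "k < K \<Longrightarrow> square_integrable M (\<lambda>\<omega>. f \<omega> k)"
  unfolding square_integrable_def using f_meas f_L2 by auto

lemma u_square_integrable: "i < p \<Longrightarrow> square_integrable M (\<lambda>\<omega>. u \<omega> i)"
  unfolding square_integrable_def using u_meas u_L2 by auto

definition fcen :: "nat \<Rightarrow> 'a \<Rightarrow> real" where
  "fcen k \<omega> = f \<omega> k - (\<integral>\<omega>'. f \<omega>' k \<partial>M)"

definition signal :: "'a \<Rightarrow> nat \<Rightarrow> real" where
  "signal \<omega> i = (\<Sum>k<K. A $$ (k, i) * fcen k \<omega>)"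

lemma fcen_square_integrable: "k < K \<Longrightarrow> square_integrable M (fcen k)"
  unfolding fcen_def by (intro square_integrable_diff f_square_integrable square_integrable_const)

lemma integral_fcen: "k < K \<Longrightarrow> (\<integral>\<omega>. fcen k \<omega> \<partial>M) = 0"
  unfolding fcen_def using square_integrable_integrable[OF f_square_integrable] by (simp add: prob_space)

lemma signal_square_integrable: "square_integrable M (\<lambda>\<omega>. signal \<omega> i)"
  unfolding signal_def by (intro square_integrable_sum square_integrable_cmult fcen_square_integrable) auto

lemma integral_signal: "(\<integral>\<omega>. signal \<omega> i \<partial>M) = 0"
  unfolding signal_def
  using square_integrable_integrable[OF fcen_square_integrable] integral_fcen by simp

lemma outcome_centered:
  assumes i: "i < p"
  shows "y \<omega> i - (\<integral>\<omega>. y \<omega> i \<partial>M) = signal \<omega> i + u \<omega> i"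
proof -
  have y: "(\<lambda>\<omega>. y \<omega> i) = (\<lambda>\<omega>. (\<Sum>k<K. f \<omega> k * A $$ (k, i)) + u \<omega> i)" using model[OF i] by auto
  have int_f: "integrable M (\<lambda>\<omega>. f \<omega> k * A $$ (k, i))" if "k < K" for k
    using square_integrable_integrable[OF f_square_integrable[OF that]] by simp
  have "(\<integral>\<omega>. y \<omega> i \<partial>M) = (\<integral>\<omega>. (\<Sum>k<K. f \<omega> k * A $$ (k, i)) \<partial>M) + (\<integral>\<omega>. u \<omega> i \<partial>M)"
    unfolding y by (rule Bochner_Integration.integral_add)
      (use int_f square_integrable_integrable[OF u_square_integrable[OF i]] in auto)
  also have "(\<integral>\<omega>. (\<Sum>k<K. f \<omega> k * A $$ (k, i)) \<partial>M) = (\<Sum>k<K. \<integral>\<omega>. f \<omega> k * A $$ (k, i) \<partial>M)"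
    by (rule Bochner_Integration.integral_sum) (use int_f in auto)
  finally have "(\<integral>\<omega>. y \<omega> i \<partial>M) = (\<Sum>k<K. (\<integral>\<omega>. f \<omega> k \<partial>M) * A $$ (k, i))"
    using u_mean[OF i] by simp
  then show ?thesis
    using model[OF i, of \<omega>] unfolding signal_def fcen_def
    by (simp add: algebra_simps sum_subtractf)
qed

lemma integral_fcen_u:
  assumes k: "k < K" and l: "l < p"
  shows "(\<integral>\<omega>. fcen k \<omega> * u \<omega> l \<partial>M) = 0"
proof -
  have int: "integrable M (\<lambda>\<omega>. f \<omega> k)" "integrable M (\<lambda>\<omega>. u \<omega> l)"
    using square_integrable_integrable f_square_integrable[OF k] u_square_integrable[OF l] by auto
  have "(\<integral>\<omega>. f \<omega> k * u \<omega> l \<partial>M) = (\<integral>\<omega>. f \<omega> k \<partial>M) * (\<integral>\<omega>. u \<omega> l \<partial>M)"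
    using indep_vars_integral_mult[OF indep[OF l], of 0 1 k l] k l int by simp
  moreover have "(\<integral>\<omega>. fcen k \<omega> * u \<omega> l \<partial>M)
      = (\<integral>\<omega>. f \<omega> k * u \<omega> l \<partial>M) - (\<integral>\<omega>. f \<omega> k \<partial>M) * (\<integral>\<omega>. u \<omega> l \<partial>M)"
    unfolding fcen_def left_diff_distrib
    using square_integrable_mult_integrable[OF f_square_integrable[OF k] u_square_integrable[OF l]] int
    by simp
  ultimately show ?thesis by simp
qed

lemma integral_u_u: "i < p \<Longrightarrow> l < p \<Longrightarrow> i \<noteq> l \<Longrightarrow> (\<integral>\<omega>. u \<omega> i * u \<omega> l \<partial>M) = 0"
  using indep_vars_integral_mult[OF indep, of i 1 2 i l] u_mean[of i]
    square_integrable_integrable[OF u_square_integrable, of i]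
    square_integrable_integrable[OF u_square_integrable, of l]
  by (simp add: numeral_2_eq_2)

lemma integral_signal_u: "l < p \<Longrightarrow> (\<integral>\<omega>. signal \<omega> i * u \<omega> l \<partial>M) = 0"
  using integral_sum_mult_sum[of "{..<K}" "{l}" fcen "\<lambda>b \<omega>. u \<omega> b" "\<lambda>k. A $$ (k, i)" "\<lambda>_. 1"]
    fcen_square_integrable u_square_integrable integral_fcen_u
  unfolding signal_def by simp

lemma cov_u: "i < p \<Longrightarrow> l < p \<Longrightarrow>
    cov M (\<lambda>\<omega>. u \<omega> i) (\<lambda>\<omega>. u \<omega> l) = (if i = l then sigma2 M u i else 0)"
  using integral_u_u[of i l] u_mean unfolding cov_def sigma2_def by auto

lemma cov_signal:
  "cov M (\<lambda>\<omega>. signal \<omega> i) (\<lambda>\<omega>. signal \<omega> l) = col A i \<bullet> (Sf *\<^sub>v col A l)"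
  if "i < p" "l < p"
proof -
  have "cov M (\<lambda>\<omega>. signal \<omega> i) (\<lambda>\<omega>. signal \<omega> l)
      = (\<Sum>k<K. \<Sum>k'<K. A $$ (k, i) * A $$ (k', l) * (\<integral>\<omega>. fcen k \<omega> * fcen k' \<omega> \<partial>M))"
    unfolding cov_def integral_signal diff_zero unfolding signal_def
    by (rule integral_sum_mult_sum) (auto intro: fcen_square_integrable)
  also have "\<dots> = col A i \<bullet> (Sf *\<^sub>v col A l)"
    using quadratic_form_double_sum[of Sf K "col A i" "col A l"] A_dim that
    by (simp add: cov_mat_def cov_def fcen_def)
  finally show ?thesis .
qed

lemma cov_outcomes:
  assumes i: "i < p" and l: "l < p"
  shows "Sy $$ (i, l) = cov M (\<lambda>\<omega>. signal \<omega> i) (\<lambda>\<omega>. signal \<omega> l) + (if i = l then sigma2 M u i else 0)"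
proof -
  have int: "integrable M (\<lambda>\<omega>. X \<omega> * Z \<omega>)"
    if "square_integrable M X" "square_integrable M Z" for X Z
    using square_integrable_mult_integrable[OF that] .
  have "Sy $$ (i, l) = (\<integral>\<omega>. (signal \<omega> i + u \<omega> i) * (signal \<omega> l + u \<omega> l) \<partial>M)"
    using i l by (simp add: cov_mat_def cov_def outcome_centered)
  also have "\<dots> = (\<integral>\<omega>. signal \<omega> i * signal \<omega> l + signal \<omega> i * u \<omega> l
      + (signal \<omega> l * u \<omega> i + u \<omega> i * u \<omega> l) \<partial>M)"
    by (simp add: algebra_simps)
  also have "\<dots> = (\<integral>\<omega>. signal \<omega> i * signal \<omega> l \<partial>M) + (\<integral>\<omega>. signal \<omega> i * u \<omega> l \<partial>M)
      + ((\<integral>\<omega>. signal \<omega> l * u \<omega> i \<partial>M) + (\<integral>\<omega>. u \<omega> i * u \<omega> l \<partial>M))"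
    using i l by (simp add: int signal_square_integrable u_square_integrable)
  also have "\<dots> = cov M (\<lambda>\<omega>. signal \<omega> i) (\<lambda>\<omega>. signal \<omega> l) + (if i = l then sigma2 M u i else 0)"
    using cov_u[OF i l] i l u_mean
    by (simp add: integral_signal_u cov_def integral_signal)
  finally show ?thesis .
qed

lemma outcome_cov_carrier: "Sy \<in> carrier_mat p p"
  unfolding cov_mat_def by simp

lemma factor_cov_carrier: "Sf \<in> carrier_mat K K"
  unfolding cov_mat_def by simp

lemma outcome_cov_symmetric: "i < p \<Longrightarrow> l < p \<Longrightarrow> Sy $$ (i, l) = Sy $$ (l, i)"
  unfolding cov_mat_def by (simp add: cov_commute)

lemma outcome_cov_pd: "pd_mat Sy"
proof -
  define Du where "Du = mat p p (\<lambda>(i, l). if i = l then sigma2 M u i else 0)"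
  have "Sy = cov_mat M signal p + Du"
  proof (rule eq_matI)
    fix i l assume "i < dim_row (cov_mat M signal p + Du)" "l < dim_col (cov_mat M signal p + Du)"
    then have il: "i < p" "l < p" by (simp_all add: Du_def)
    show "Sy $$ (i, l) = (cov_mat M signal p + Du) $$ (i, l)"
      unfolding cov_outcomes[OF il] using il by (simp add: Du_def cov_mat_def[of M signal])
  qed (simp_all add: cov_mat_def Du_def)
  moreover have "pd_mat Du"
    by (rule positive_diagonal_pd_mat[of _ p]) (auto simp: Du_def diagonal_mat_def sigma2_pos)
  moreover have "psd_mat (cov_mat M signal p)" by (rule cov_mat_psd) (rule signal_square_integrable)
  moreover have "cov_mat M signal p \<in> carrier_mat p p" "Du \<in> carrier_mat p p"
    by (simp_all add: cov_mat_def Du_def)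
  ultimately show ?thesis by (metis psd_add_pd_mat)
qed

end

context factor_model
begin

lemma y_square_integrable:
  assumes i: "i < p"
  shows "square_integrable M (\<lambda>\<omega>. y \<omega> i)"
proof -
  have "square_integrable M (\<lambda>\<omega>. f \<omega> k * A $$ (k, i))" if "k < K" for k
    using square_integrable_cmult[OF f_square_integrable[OF that], of "A $$ (k, i)"]
    by (simp add: mult.commute)
  then have "square_integrable M (\<lambda>\<omega>. (\<Sum>k<K. f \<omega> k * A $$ (k, i)) + u \<omega> i)"
    by (intro square_integrable_add square_integrable_sum u_square_integrable i) auto
  moreover have "(\<lambda>\<omega>. y \<omega> i) = (\<lambda>\<omega>. (\<Sum>k<K. f \<omega> k * A $$ (k, i)) + u \<omega> i)"
    using model[OF i] by auto
  ultimately show ?thesis by simp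
qed

lemma outcome_cov_index:
  "i < p \<Longrightarrow> l < p \<Longrightarrow>
    Sy $$ (i, l) = col A i \<bullet> (Sf *\<^sub>v col A l) + (if i = l then sigma2 M u i else 0)"
  by (simp add: cov_outcomes cov_signal)

end

locale factor_model_outcome = factor_model +
  fixes j :: nat
  assumes j: "j < p"
begin

abbreviation Am where "Am \<equiv> A_minus A p j"
abbreviation Sfh where "Sfh \<equiv> mat_sqrt Sf"
abbreviation Ab where "Ab \<equiv> Abar M f A p j"
abbreviation ab where "ab \<equiv> abar M f A j"
abbreviation D where "D \<equiv> Sigma_U_minus M u p j"
abbreviation al where "al \<equiv> alpha_formula M f u A p j"
abbreviation t2 where "t2 \<equiv> tau2 M f u A p j"

lemma dim_row_A: "dim_row A = K"
  using A_dim by simp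

lemma A_minus_carrier: "Am \<in> carrier_mat (p - 1) K"
  unfolding A_minus_def dim_row_A by simp

lemma row_A_minus: "r < p - 1 \<Longrightarrow> row Am r = col A (insert_index j r)"
  unfolding A_minus_def dim_row_A using A_dim by (auto simp: insert_index_less[OF j])

lemma Sf_sqrt: "Sfh \<in> carrier_mat K K" "Sfh\<^sup>T = Sfh" "Sfh * Sfh = Sf"
  using mat_sqrt[OF factor_cov_carrier cov_mat_transpose cov_mat_psd[OF f_square_integrable]]
  by auto

lemma Abar_eq: "Ab = Am * Sfh"
  unfolding Abar_def dim_row_A ..

lemma abar_eq: "ab = Sfh *\<^sub>v col A j"
  unfolding abar_def dim_row_A a_col_def col_def by simp

lemma Abar_carrier: "Ab \<in> carrier_mat (p - 1) K"
  unfolding Abar_eq using A_minus_carrier Sf_sqrt by simp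

lemma abar_carrier: "ab \<in> carrier_vec K"
  unfolding abar_eq by (rule mult_mat_vec_carrier[OF Sf_sqrt(1)]) (use A_dim j in auto)

lemma Sigma_U_minus_carrier: "D \<in> carrier_mat (p - 1) (p - 1)"
  unfolding Sigma_U_minus_def cov_mat_def by simp

lemma Sigma_U_minus_index:
  "r < p - 1 \<Longrightarrow> s < p - 1 \<Longrightarrow> D $$ (r, s) = (if r = s then sigma2 M u (insert_index j r) else 0)"
  unfolding Sigma_U_minus_def cov_mat_def
  using cov_u[OF insert_index_less[OF j] insert_index_less[OF j]] by (simp add: insert_index_eq_iff)

lemma Sigma_U_minus_pd: "pd_mat D"
proof (rule positive_diagonal_pd_mat[OF Sigma_U_minus_carrier])
  show "diagonal_mat D" unfolding diagonal_mat_def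
    using Sigma_U_minus_index carrier_matD[OF Sigma_U_minus_carrier] by auto
  show "D $$ (r, r) > 0" if "r < p - 1" for r
    using Sigma_U_minus_index[OF that that] sigma2_pos insert_index_less[OF j that] by simp
qed

lemma Sigma_U_minus_inv:
  "mat_inv D \<in> carrier_mat (p - 1) (p - 1)" "D * mat_inv D = 1\<^sub>m (p - 1)" "psd_mat (mat_inv D)"
  using mat_inv_nonsingular[OF Sigma_U_minus_carrier pd_mat_nonsingular[OF Sigma_U_minus_carrier
      Sigma_U_minus_pd]] psd_mat_inv[OF Sigma_U_minus_carrier pd_mat_imp_psd_mat[OF Sigma_U_minus_pd]]
  by auto

lemma Gbar_inv:
  "mat_inv (Gbar M f u A p j) \<in> carrier_mat K K"
  "(1\<^sub>m K + Ab\<^sup>T * mat_inv D * Ab) * mat_inv (Gbar M f u A p j) = 1\<^sub>m K"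
proof -
  have G: "Gbar M f u A p j = 1\<^sub>m K + Ab\<^sup>T * mat_inv D * Ab"
    unfolding Gbar_def dim_row_A ..
  have "Gbar M f u A p j \<in> carrier_mat K K" unfolding G using Abar_carrier Sigma_U_minus_inv by auto
  from mat_inv_nonsingular[OF this identity_plus_psd_congruence_nonsingular[OF Abar_carrier
      Sigma_U_minus_inv(1,3)]]
  show "mat_inv (Gbar M f u A p j) \<in> carrier_mat K K"
    "(1\<^sub>m K + Ab\<^sup>T * mat_inv D * Ab) * mat_inv (Gbar M f u A p j) = 1\<^sub>m K"
    unfolding G by auto
qed

lemma alpha_formula_carrier: "al \<in> carrier_vec (p - 1)"
  unfolding alpha_formula_def using Sigma_U_minus_inv Abar_carrier Gbar_inv abar_carrier by auto

lemma alpha_formula_solves: "(Ab * Ab\<^sup>T + D) *\<^sub>v al = Ab *\<^sub>v ab"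
  unfolding alpha_formula_def
  by (rule woodbury_solution[OF Abar_carrier Sigma_U_minus_carrier Sigma_U_minus_inv(1,2)
        Gbar_inv abar_carrier])

lemma Sf_sqrt_inner:
  assumes x: "x \<in> carrier_vec K" and z: "z \<in> carrier_vec K"
  shows "(Sfh *\<^sub>v x) \<bullet> (Sfh *\<^sub>v z) = x \<bullet> (Sf *\<^sub>v z)"
proof -
  have "(Sfh *\<^sub>v x) \<bullet> (Sfh *\<^sub>v z) = (Sfh\<^sup>T *\<^sub>v (Sfh *\<^sub>v z)) \<bullet> x"
    using transpose_vec_mult_scalar[OF Sf_sqrt(1) x, of "Sfh *\<^sub>v z"] Sf_sqrt(1) z x
    by (simp add: comm_scalar_prod[of _ K])
  also have "Sfh\<^sup>T *\<^sub>v (Sfh *\<^sub>v z) = Sf *\<^sub>v z"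
    using Sf_sqrt z by (simp add: assoc_mult_mat_vec[symmetric, of _ K K _ K])
  finally show ?thesis using comm_scalar_prod[of x K "Sf *\<^sub>v z"] factor_cov_carrier z x by simp
qed

lemma row_Abar: "r < p - 1 \<Longrightarrow> row Ab r = Sfh *\<^sub>v col A (insert_index j r)"
proof -
  assume r: "r < p - 1"
  have "row Ab r = Sfh\<^sup>T *\<^sub>v row Am r"
    unfolding Abar_eq using A_minus_carrier Sf_sqrt(1) r
    by (intro eq_vecI) (auto simp: comm_scalar_prod[of _ K])
  then show ?thesis using Sf_sqrt(2) row_A_minus[OF r] by simp
qed

lemma outcome_cov_as_inner:
  "i < p \<Longrightarrow> l < p \<Longrightarrow>
    Sy $$ (i, l) = (Sfh *\<^sub>v col A i) \<bullet> (Sfh *\<^sub>v col A l) + (if i = l then sigma2 M u i else 0)"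
  using Sf_sqrt_inner A_dim by (simp add: outcome_cov_index)

lemma Abar_gram_index:
  assumes r: "r < p - 1" and s: "s < p - 1"
  shows "(Ab * Ab\<^sup>T + D) $$ (r, s) = Sy $$ (insert_index j r, insert_index j s)"
  using r s Abar_carrier Sigma_U_minus_carrier insert_index_less[OF j]
  by (simp add: row_Abar outcome_cov_as_inner Sigma_U_minus_index insert_index_eq_iff)

lemma Abar_abar_index: "r < p - 1 \<Longrightarrow> (Ab *\<^sub>v ab) $ r = Sy $$ (insert_index j r, j)"
  using Abar_carrier insert_index_less[OF j] j
  by (simp add: row_Abar abar_eq outcome_cov_as_inner)

lemma abar_inner: "ab \<bullet> ab + sigma2 M u j = Sy $$ (j, j)"
  using j by (simp add: abar_eq outcome_cov_as_inner)

lemma tau2_eq: "t2 = Sy $$ (j, j) - (\<Sum>i<p - 1. Sy $$ (j, insert_index j i) * al $ i)"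
proof -
  have "ab \<bullet> (Ab\<^sup>T *\<^sub>v al) = al \<bullet> (Ab *\<^sub>v ab)"
    using transpose_vec_mult_scalar[OF Abar_carrier abar_carrier alpha_formula_carrier]
      Abar_carrier abar_carrier alpha_formula_carrier
    by (simp add: comm_scalar_prod[of _ K])
  also have "\<dots> = (\<Sum>i<p - 1. al $ i * (Ab *\<^sub>v ab) $ i)"
    using alpha_formula_carrier Abar_carrier by (simp add: scalar_prod_def atLeast0LessThan)
  also have "\<dots> = (\<Sum>i<p - 1. Sy $$ (j, insert_index j i) * al $ i)"
    using j by (intro sum.cong) (auto simp: Abar_abar_index outcome_cov_symmetric insert_index_less)
  finally show ?thesis using abar_inner unfolding tau2_def by simp
qed

lemma outcome_cov_residual_weights: "Sy *\<^sub>v residual_weights p j al = t2 \<cdot>\<^sub>v unit_vec p j"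
proof (rule eq_vecI)
  fix m assume "m < dim_vec (t2 \<cdot>\<^sub>v unit_vec p j)"
  then have m: "m < p" by simp
  show "(Sy *\<^sub>v residual_weights p j al) $ m = (t2 \<cdot>\<^sub>v unit_vec p j) $ m"
  proof (cases "m = j")
    case True
    then show ?thesis
      using j by (simp add: mult_residual_weights_index[OF outcome_cov_carrier j j] tau2_eq)
  next
    case False
    define r where "r = delete_index j m"
    have r: "r < p - 1" "m = insert_index j r"
      unfolding r_def using delete_index_less[OF j m False] insert_delete_index_eq[OF False] by auto
    have "Sy $$ (m, j) = ((Ab * Ab\<^sup>T + D) *\<^sub>v al) $ r"
      unfolding alpha_formula_solves using Abar_abar_index[OF r(1)] r(2) by simp
    also have "\<dots> = (\<Sum>i<p - 1. (Ab * Ab\<^sup>T + D) $$ (r, i) * al $ i)"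
      using r Abar_carrier Sigma_U_minus_carrier alpha_formula_carrier
      by (intro mult_mat_vec_index_sum) auto
    also have "\<dots> = (\<Sum>i<p - 1. Sy $$ (m, insert_index j i) * al $ i)"
      using r by (simp add: Abar_gram_index)
    finally show ?thesis
      using m j False by (simp add: mult_residual_weights_index[OF outcome_cov_carrier j m])
  qed
qed (simp add: cov_mat_def)

lemma precision_row:
  "l < p \<Longrightarrow> mat_inv Sy $$ (j, l) = residual_weights p j al $ l / t2"
  by (rule mat_inv_row_of_solution[OF outcome_cov_carrier cov_mat_transpose outcome_cov_pd j
        residual_weights_carrier residual_weights_self[OF j] outcome_cov_residual_weights])

lemma residual_objective:
  "(\<integral>\<omega>. ((y \<omega> j - (\<integral>\<omega>'. y \<omega>' j \<partial>M))
       - (\<Sum>i<p - 1. (y \<omega> (insert_index j i) - (\<integral>\<omega>'. y \<omega>' (insert_index j i) \<partial>M)) * \<beta> $ i))\<^sup>2 \<partial>M)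
   = residual_weights p j \<beta> \<bullet> (Sy *\<^sub>v residual_weights p j \<beta>)"
  (is "?lhs = _")
proof -
  have "?lhs = (\<integral>\<omega>. (\<Sum>l<p. residual_weights p j \<beta> $ l * (y \<omega> l - (\<integral>\<omega>'. y \<omega>' l \<partial>M)))\<^sup>2 \<partial>M)"
    by (simp add: sum_residual_weights[OF j])
  also have "\<dots> = residual_weights p j \<beta> \<bullet> (Sy *\<^sub>v residual_weights p j \<beta>)"
    by (rule integral_centered_sum_square) (auto intro: y_square_integrable residual_weights_carrier)
  finally show ?thesis .
qed

lemma alpha_star_eq: "alpha_star M y p j = al"
  unfolding alpha_star_def residual_objective
proof (rule the_equality)
  note min = pd_quadratic_form_min[OF outcome_cov_carrier cov_mat_transpose outcome_cov_pd j
      residual_weights_carrier residual_weights_self[OF j] outcome_cov_residual_weights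
      residual_weights_carrier residual_weights_self[OF j]]
  show "al \<in> carrier_vec (p - 1) \<and> (\<forall>\<beta> \<in> carrier_vec (p - 1).
      residual_weights p j al \<bullet> (Sy *\<^sub>v residual_weights p j al)
      \<le> residual_weights p j \<beta> \<bullet> (Sy *\<^sub>v residual_weights p j \<beta>))"
    using alpha_formula_carrier min(1) by blast
  fix \<gamma> assume "\<gamma> \<in> carrier_vec (p - 1) \<and> (\<forall>\<beta> \<in> carrier_vec (p - 1).
      residual_weights p j \<gamma> \<bullet> (Sy *\<^sub>v residual_weights p j \<gamma>)
      \<le> residual_weights p j \<beta> \<bullet> (Sy *\<^sub>v residual_weights p j \<beta>))"
  then show "\<gamma> = al"
    using min(2) alpha_formula_carrier residual_weights_inj[OF j] by metis
qed

end

theorem lemma1: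
  fixes M :: "'a measure" and f u y :: "'a \<Rightarrow> nat \<Rightarrow> real"
    and A :: "real mat" and p K :: nat and c C :: real
  assumes prob: "prob_space M"
    and A_dim: "A \<in> carrier_mat K p"
    (* model y = A' f + u, one draw t (iid over t) *)
    and model: "\<And>\<omega> i. i < p \<Longrightarrow> y \<omega> i = (\<Sum>k<K. f \<omega> k * A $$ (k, i)) + u \<omega> i"
    and f_meas: "\<And>k. k < K \<Longrightarrow> (\<lambda>\<omega>. f \<omega> k) \<in> borel_measurable M"
    and u_meas: "\<And>i. i < p \<Longrightarrow> (\<lambda>\<omega>. u \<omega> i) \<in> borel_measurable M"
    and f_L2: "\<And>k. k < K \<Longrightarrow> integrable M (\<lambda>\<omega>. (f \<omega> k)\<^sup>2)"
    and u_L2: "\<And>i. i < p \<Longrightarrow> integrable M (\<lambda>\<omega>. (u \<omega> i)\<^sup>2)"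
    and u_mean: "\<And>i. i < p \<Longrightarrow> (\<integral>\<omega>. u \<omega> i \<partial>M) = 0"
    (* Assumption 1: f_t, u_jt, U_{-jt} mutually independent, for each j *)
    and indep: "\<And>j. j < p \<Longrightarrow> prob_space.indep_vars M
        (\<lambda>g. PiM (case g of 0 \<Rightarrow> {..<K} | Suc 0 \<Rightarrow> {j} | _ \<Rightarrow> {..<p} - {j}) (\<lambda>_. borel))
        (\<lambda>g \<omega>. case g of 0 \<Rightarrow> restrict (f \<omega>) {..<K}
                      | Suc 0 \<Rightarrow> restrict (u \<omega>) {j}
                      | _ \<Rightarrow> restrict (u \<omega>) ({..<p} - {j}))
        {0, 1, 2::nat}"
    (* Assumption 2(i) *)
    and c_pos: "0 < c"
    and SU_eig: "\<And>j ev. j < p \<Longrightarrow> eigenvalue (Sigma_U_minus M u p j) ev \<Longrightarrow> ev \<ge> c"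
    and sigma_up: "\<And>j. j < p \<Longrightarrow> sigma2 M u j \<le> C"
    and sigma_low: "\<And>j. j < p \<Longrightarrow> sigma2 M u j \<ge> c"
    (* Assumption 3 (non-asymptotic parts) *)
    and p_K: "p > K + 1"
    and A_rank: "\<And>j. j < p \<Longrightarrow> vec_space.rank (p - 1) (A_minus A p j) = K"
    and Sf_rank: "vec_space.rank K (cov_mat M f K) = K"
    and Sf_eig: "\<And>ev. eigenvalue (cov_mat M f K) ev \<Longrightarrow> ev \<le> C"
  shows "invertible_mat (cov_mat M y p) \<and>
    (\<forall>j < p.
       mat_inv (cov_mat M y p) $$ (j, j) = 1 / tau2 M f u A p j
     \<and> alpha_star M y p j = alpha_formula M f u A p j
     \<and> (\<forall>i < p - 1. mat_inv (cov_mat M y p) $$ (j, insert_index j i)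
                      = - (alpha_star M y p j $ i) / tau2 M f u A p j))
    \<and> mat_inv (cov_mat M y p) = mat p p (\<lambda>(j, l).
         if l = j then 1 / tau2 M f u A p j
         else - (alpha_star M y p j $ delete_index j l) / tau2 M f u A p j)"
proof -
  (* Positivity of the sigma_j^2 alone makes the covariance positive definite. *)
  have sigma2_pos: "\<And>j. j < p \<Longrightarrow> sigma2 M u j > 0" using c_pos sigma_low by (metis order_less_le_trans)
  have FM: "factor_model M f u y A p K"
    unfolding factor_model_def factor_model_axioms_def
    using prob A_dim model f_meas u_meas f_L2 u_L2 u_mean indep sigma2_pos by simp
  then interpret factor_model M f u y A p K .
  have outcome: "factor_model_outcome M f u y A p K j" if "j < p" for j
    using FM that by (simp add: factor_model_outcome_def factor_model_outcome_axioms_def)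
  note alpha_star = factor_model_outcome.alpha_star_eq[OF outcome]
  let ?Th = "mat_inv (cov_mat M y p)"
  have row: "?Th $$ (j, l) = residual_weights p j (alpha_star M y p j) $ l / tau2 M f u A p j"
    if "j < p" "l < p" for j l
    using factor_model_outcome.precision_row[OF outcome[OF that(1)] that(2)] alpha_star[OF that(1)] by simp
  have Th: "invertible_mat (cov_mat M y p)" "?Th \<in> carrier_mat p p"
    using mat_inv_nonsingular[OF outcome_cov_carrier
        pd_mat_nonsingular[OF outcome_cov_carrier outcome_cov_pd]] by auto
  have "\<forall>j < p. ?Th $$ (j, j) = 1 / tau2 M f u A p j
     \<and> alpha_star M y p j = alpha_formula M f u A p j
     \<and> (\<forall>i < p - 1. ?Th $$ (j, insert_index j i) = - (alpha_star M y p j $ i) / tau2 M f u A p j)"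
    using row residual_weights_self residual_weights_insert_index insert_index_less alpha_star
    by simp
  moreover have "?Th = mat p p (\<lambda>(j, l).
         if l = j then 1 / tau2 M f u A p j
         else - (alpha_star M y p j $ delete_index j l) / tau2 M f u A p j)"
    by (rule eq_matI) (use Th(2) row in \<open>auto simp: residual_weights_def\<close>)
  ultimately show ?thesis using Th(1) by blast
qed

end
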